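(* Let $\theta_1,\theta_2>0$, $\theta=\theta_1+\theta_2$, $p=\theta_1/\theta\in(0,1)$, $\beta>0$, $\phi=\theta/\beta$, and consider the Fleming–Viot process on $[0,1]$ with generator \[ \mathcal{L}g(x)=x\big[g(1)-g(x)\big]+(1-x)\big[g(0)-g(x)\big]+v(x)g'(x),\qquad v(x)=\tfrac12(\theta_1-\theta x)+\tfrac12\beta x(1-x). \] Let $r_1,r_2=\frac12\big(1-\phi\pm\sqrt{(1-\phi)^2+4\phi p}\big)$ be the roots of $\chi(1-\chi)+\phi(p-\chi)=0$, so that $0<r_1<1$ and $r_2<0$. Then the replacement transition probabilities at time $t$ are \[ p_{11}(t)=\mu(t)=r_1+(r_1-r_2)\frac{\frac{1-r_1}{1-r_2}e^{-\beta(r_1-r_2)t/2}}{1-\frac{1-r_1}{1-r_2}e^{-\beta(r_1-r_2)t/2}},\qquad p_{21}(t)=\nu(t)=r_1+(r_1-r_2)\frac{\frac{r_1}{r_2}e^{-\beta(r_1-r_2)t/2}}{1-\frac{r_1}{r_2}e^{-\beta(r_1-r_2)t/2}}, \] with $p_{12}(t)=1-p_{11}(t)$, $p_{22}(t)=1-p_{21}(t)$, and $P=\mathbb{E}[P(T)]$ for $T$ exponential with rate 1. The stationary density of the process is \begin{align*} &\pi_1\frac{2}{\beta}\Big(\frac{\xi-r_1}{\xi-r_2}\cdot\frac{1-r_2}{1-r_1}\Big)^{\frac{2}{\beta(r_1-r_2)}-1}\frac{1}{(\xi-r_2)^2}\cdot\frac{1-r_2}{1-r_1}\,I\{r_1<\xi<1\}\\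 &+\pi_2\frac{2}{\beta}\Big(\frac{r_1-\xi}{\xi-r_2}\cdot\frac{-r_2}{r_1}\Big)^{\frac{2}{\beta(r_1-r_2)}-1}\frac{1}{(\xi-r_2)^2}\cdot\frac{-r_2}{r_1}\,I\{0<\xi<r_1\}, \end{align*} where $(\pi_1,\pi_2)$ is the stationary distribution of $P$.
   Context: The process describes the frequency of type 1 in a two-type population under the star-shaped model with mutation and selection: at the times of a rate-1 Poisson process the whole population is replaced by all type 1 individuals (with probability equal to the current type-1 frequency) or all type 2 individuals, and between replacements the frequency follows $\dot\chi=v(\chi)$. $\mu(t)$ ($\nu(t)$) is the solution of $\dot\chi=v(\chi)$ with $\chi(0)=1$ ($\chi(0)=0$); $P(t)=(p_{ij}(t))$ gives the probabilities that, starting from an all-type-$i$ replacement, an individual at time $t$ (before the next replacement) is of type $j$; $P$ is the transition matrix between the types of successive replacements. *)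

theory Defs
  imports "HOL-Probability.Probability"
begin

definition drift :: "real \<Rightarrow> real \<Rightarrow> real \<Rightarrow> real \<Rightarrow> real" where
  "drift \<theta>1 \<theta>2 \<beta> x = (\<theta>1 - (\<theta>1 + \<theta>2) * x) / 2 + \<beta> * x * (1 - x) / 2"

definition phi :: "real \<Rightarrow> real \<Rightarrow> real \<Rightarrow> real" where
  "phi \<theta>1 \<theta>2 \<beta> = (\<theta>1 + \<theta>2) / \<beta>"

definition pp :: "real \<Rightarrow> real \<Rightarrow> real" where
  "pp \<theta>1 \<theta>2 = \<theta>1 / (\<theta>1 + \<theta>2)"

definition root1 :: "real \<Rightarrow> real \<Rightarrow> real \<Rightarrow> real" where
  "root1 \<theta>1 \<theta>2 \<beta> = (1 - phi \<theta>1 \<theta>2 \<beta>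
     + sqrt ((1 - phi \<theta>1 \<theta>2 \<beta>)\<^sup>2 + 4 * phi \<theta>1 \<theta>2 \<beta> * pp \<theta>1 \<theta>2)) / 2"

definition root2 :: "real \<Rightarrow> real \<Rightarrow> real \<Rightarrow> real" where
  "root2 \<theta>1 \<theta>2 \<beta> = (1 - phi \<theta>1 \<theta>2 \<beta>
     - sqrt ((1 - phi \<theta>1 \<theta>2 \<beta>)\<^sup>2 + 4 * phi \<theta>1 \<theta>2 \<beta> * pp \<theta>1 \<theta>2)) / 2"

definition mu_formula :: "real \<Rightarrow> real \<Rightarrow> real \<Rightarrow> real \<Rightarrow> real" where
  "mu_formula \<theta>1 \<theta>2 \<beta> t =
    (let r1 = root1 \<theta>1 \<theta>2 \<beta>; r2 = root2 \<theta>1 \<theta>2 \<beta>;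
         q = (1 - r1) / (1 - r2) * exp (- \<beta> * (r1 - r2) * t / 2)
     in r1 + (r1 - r2) * (q / (1 - q)))"

definition nu_formula :: "real \<Rightarrow> real \<Rightarrow> real \<Rightarrow> real \<Rightarrow> real" where
  "nu_formula \<theta>1 \<theta>2 \<beta> t =
    (let r1 = root1 \<theta>1 \<theta>2 \<beta>; r2 = root2 \<theta>1 \<theta>2 \<beta>;
         q = r1 / r2 * exp (- \<beta> * (r1 - r2) * t / 2)
     in r1 + (r1 - r2) * (q / (1 - q)))"

text \<open>Transition matrix between types of successive replacements:
  P = E[P(T)], T ~ Exp(1), where p11 = mu, p12 = 1 - mu, p21 = nu, p22 = 1 - nu.\<close>

definition Pbar :: "(real \<Rightarrow> real) \<Rightarrow> real" where
  "Pbar f = (LINT t:{0..}|lborel. exp (- t) * f t)"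

definition stationary_P :: "(real \<Rightarrow> real) \<Rightarrow> (real \<Rightarrow> real) \<Rightarrow> real \<Rightarrow> real \<Rightarrow> bool" where
  "stationary_P \<mu> \<nu> \<pi>1 \<pi>2 \<longleftrightarrow>
     \<pi>1 \<ge> 0 \<and> \<pi>2 \<ge> 0 \<and> \<pi>1 + \<pi>2 = 1 \<and>
     \<pi>1 = \<pi>1 * Pbar \<mu> + \<pi>2 * Pbar \<nu> \<and>
     \<pi>2 = \<pi>1 * Pbar (\<lambda>t. 1 - \<mu> t) + \<pi>2 * Pbar (\<lambda>t. 1 - \<nu> t)"

definition gen :: "real \<Rightarrow> real \<Rightarrow> real \<Rightarrow> (real \<Rightarrow> real) \<Rightarrow> (real \<Rightarrow> real) \<Rightarrow> real \<Rightarrow> real" where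
  "gen \<theta>1 \<theta>2 \<beta> g g' x = x * (g 1 - g x) + (1 - x) * (g 0 - g x) + drift \<theta>1 \<theta>2 \<beta> x * g' x"

definition stationary_gen :: "real \<Rightarrow> real \<Rightarrow> real \<Rightarrow> real measure \<Rightarrow> bool" where
  "stationary_gen \<theta>1 \<theta>2 \<beta> M \<longleftrightarrow>
     prob_space M \<and> sets M = sets borel \<and> emeasure M {0..1} = 1 \<and>
     (\<forall>g g'. (\<forall>x\<in>{0..1}. (g has_real_derivative g' x) (at x within {0..1})) \<and>
             continuous_on {0..1} g' \<longrightarrow>
             (LINT x:{0..1}|M. gen \<theta>1 \<theta>2 \<beta> g g' x) = 0)"

definition stat_density :: "real \<Rightarrow> real \<Rightarrow> real \<Rightarrow> real \<Rightarrow> real \<Rightarrow> real \<Rightarrow> real" where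
  "stat_density \<theta>1 \<theta>2 \<beta> \<pi>1 \<pi>2 \<xi> =
    (let r1 = root1 \<theta>1 \<theta>2 \<beta>; r2 = root2 \<theta>1 \<theta>2 \<beta>;
         e = 2 / (\<beta> * (r1 - r2)) - 1
     in \<pi>1 * (2 / \<beta>) * (((\<xi> - r1) / (\<xi> - r2) * ((1 - r2) / (1 - r1))) powr e)
          * (1 / (\<xi> - r2)\<^sup>2) * ((1 - r2) / (1 - r1)) * indicator {r1<..<1} \<xi>
      + \<pi>2 * (2 / \<beta>) * (((r1 - \<xi>) / (\<xi> - r2) * (- r2 / r1)) powr e)
          * (1 / (\<xi> - r2)\<^sup>2) * (- r2 / r1) * indicator {0<..<r1} \<xi>)"

end

theory Submission
  imports Defs
begin

text \<open>Between replacements the type-1 frequency follows \<open>x' = v x = - (beta / 2) (x - r1) (x - r2)\<close>.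
  In the coordinate \<open>y x = (x - r1) / (x - r2)\<close> this Riccati equation becomes \<open>y' = - c y\<close> with
  \<open>c = beta (r1 - r2) / 2\<close>, which gives \<open>mu\<close> and \<open>nu\<close> in closed form; a Gronwall estimate gives
  uniqueness. The time \<open>T\<close> since the last replacement is \<open>Exp(1)\<close>-distributed, so the candidate
  stationary law is \<open>pi1 Law(mu T) + pi2 Law(nu T)\<close>, and the substitutions \<open>x = mu t\<close>, \<open>x = nu t\<close>
  turn it into the stated density. Integrating the generator along a flow by parts in time gives
  \<open>E (L g (mu T)) = g 1 p11 + g 0 p12 - g 1\<close> and the analogue for \<open>nu\<close>, so the mixture is
  annihilated by \<open>L\<close> exactly when \<open>(pi1, pi2)\<close> is stationary for \<open>P\<close>. Conversely, stationarity
  applied to \<open>g = y ^ n\<close> expresses every moment of \<open>y\<close> under a stationary law through its mean;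
  as \<open>y\<close> is injective on \<open>[0, 1]\<close>, these moments determine the law (Stone--Weierstrass and Levy's
  uniqueness theorem), which is therefore one of the mixtures, and the fixed-point equation for
  its weight has the unique solution \<open>pi1\<close>.\<close>

lemma continuous_on_compact_abs_bound:
  fixes h :: "'a::topological_space \<Rightarrow> real"
  assumes "compact K" "continuous_on K h"
  obtains C where "\<And>x. x \<in> K \<Longrightarrow> \<bar>h x\<bar> \<le> C"
  using compact_imp_bounded[OF compact_continuous_image[OF assms(2,1)]] by (force simp: bounded_iff)

lemma quadratic_ode_unique:
  fixes x z :: "real \<Rightarrow> real" and c a b T :: real
  assumes x: "\<And>t. t \<ge> 0 \<Longrightarrow> (x has_real_derivative c * (x t - a) * (x t - b)) (at t within {0..})"
    and z: "\<And>t. t \<ge> 0 \<Longrightarrow> (z has_real_derivative c * (z t - a) * (z t - b)) (at t within {0..})"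
    and init: "x 0 = z 0" and "T \<ge> 0"
  shows "x T = z T"
proof -
  have "continuous_on {0..} x" "continuous_on {0..} z"
    using x z by (auto intro!: DERIV_continuous_on)
  then have cont: "continuous_on {0..T} x" "continuous_on {0..T} z"
    by (auto elim: continuous_on_subset)
  define L where "L t = c * (x t + z t - a - b)" for t
  have "continuous_on {0..T} L"
    unfolding L_def using cont by (intro continuous_intros)
  then obtain K where K: "\<And>t. t \<in> {0..T} \<Longrightarrow> \<bar>L t\<bar> \<le> K"
    using continuous_on_compact_abs_bound[OF compact_Icc] by blast
  define d where "d t = x t - z t" for t
  \<comment> \<open>Gronwall: the field difference is \<open>L t * d t\<close> with \<open>L \<le> K\<close>, so \<open>W\<close> does not increase\<close>
  define W where "W t = (d t)\<^sup>2 * exp (- 2 * K * t)" for t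
  have "W T \<le> W 0"
  proof (rule DERIV_nonpos_imp_decreasing_open[OF \<open>T \<ge> 0\<close>])
    show "continuous_on {0..T} W"
      unfolding W_def d_def using cont by (intro continuous_intros)
    fix t assume t: "0 < t" "t < T"
    have "at t within {0..} = at t"
      using t by (intro at_within_interior) simp
    then have "(d has_real_derivative c * (x t - a) * (x t - b) - c * (z t - a) * (z t - b)) (at t)"
      unfolding d_def[abs_def] using x[of t] z[of t] t by (intro DERIV_diff) simp_all
    also have "c * (x t - a) * (x t - b) - c * (z t - a) * (z t - b) = L t * d t"
      unfolding L_def d_def by (simp add: algebra_simps)
    finally have "(W has_real_derivative
        2 * d t * (L t * d t) * exp (- 2 * K * t) + (d t)\<^sup>2 * (exp (- 2 * K * t) * (- 2 * K))) (at t)"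
      unfolding W_def by (auto intro!: derivative_eq_intros)
    moreover have "2 * d t * (L t * d t) * exp (- 2 * K * t) + (d t)\<^sup>2 * (exp (- 2 * K * t) * (- 2 * K))
        = 2 * exp (- 2 * K * t) * (d t)\<^sup>2 * (L t - K)"
      by (simp add: power2_eq_square algebra_simps)
    moreover have "2 * exp (- 2 * K * t) * (d t)\<^sup>2 * (L t - K) \<le> 0"
      using K[of t] t by (intro mult_nonneg_nonpos) (auto simp: abs_le_iff)
    ultimately show "\<exists>y. (W has_real_derivative y) (at t) \<and> y \<le> 0" by auto
  qed
  then have "(x T - z T)\<^sup>2 * exp (- 2 * K * T) \<le> 0"
    unfolding W_def d_def using init by simp
  then show ?thesis
    by (simp add: mult_le_0_iff)
qed

lemma set_integrable_exp_mult_bounded: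
  fixes h :: "real \<Rightarrow> real"
  assumes "continuous_on {0<..} h" and "\<And>t. 0 < t \<Longrightarrow> \<bar>h t\<bar> \<le> C"
  shows "set_integrable lborel {0<..} (\<lambda>t. exp (- t) * h t)"
proof (rule set_integrable_bound)
  show "set_integrable lborel {0<..} (\<lambda>t. C * exp (- (t * 1)))"
    using integrable_I0i_exp_mscale[of 1] by simp
  show "set_borel_measurable lborel {0<..} (\<lambda>t. exp (- t) * h t)"
    using assms(1) set_measurable_continuous_on[of "{0<..}" "\<lambda>t. exp (- t) * h t"]
    by (simp add: set_borel_measurable_def continuous_intros)
  show "AE t in lborel. t \<in> {0<..} \<longrightarrow> norm (exp (- t) * h t) \<le> norm (C * exp (- (t * 1)))"
    using assms(2) by (intro AE_I2) (auto simp: abs_mult intro!: mult_right_mono order_trans[OF _ abs_ge_self])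
qed

lemma set_integral_atLeast_eq_greaterThan:
  fixes f :: "real \<Rightarrow> real"
  assumes "continuous_on {a..} f"
  shows "(LINT t:{a..}|lborel. f t) = (LINT t:{a<..}|lborel. f t)"
proof (rule set_integral_cong_set)
  have "continuous_on {a<..} f"
    using assms by (rule continuous_on_subset) (simp add: subset_eq)
  then show "set_borel_measurable lborel {a..} f" "set_borel_measurable lborel {a<..} f"
    using set_measurable_continuous_on[of "{a..}" f] set_measurable_continuous_on[of "{a<..}" f] assms
    by (simp_all add: set_borel_measurable_def)
  show "AE x in lborel. (x \<in> {a<..}) = (x \<in> {a..})"
    using AE_lborel_singleton[of a] by eventually_elim auto
qed

lemma set_integral_pos:
  fixes f :: "'a \<Rightarrow> real"
  assumes f: "set_integrable M A f" and A: "A \<in> sets M" "emeasure M A \<noteq> 0"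
    and pos: "\<And>x. x \<in> A \<Longrightarrow> 0 < f x"
  shows "0 < (LINT x:A|M. f x)"
proof -
  have int: "integrable M (\<lambda>x. indicator A x * f x)" and nonneg: "AE x in M. 0 \<le> indicator A x * f x"
    using f pos by (auto simp: set_integrable_def less_imp_le split: split_indicator)
  have "\<not> (AE x in M. indicator A x * f x = 0)"
  proof
    assume "AE x in M. indicator A x * f x = 0"
    then have "AE x in M. x \<notin> A"
      by eventually_elim (use pos in \<open>fastforce split: split_indicator\<close>)
    then show False
      using A sets.sets_into_space[OF A(1)] by (subst (asm) AE_iff_measurable[of A]) auto
  qed
  then have "(LINT x:A|M. f x) \<noteq> 0"
    using integral_nonneg_eq_0_iff_AE[OF int nonneg] by (simp add: set_lebesgue_integral_def)
  moreover have "0 \<le> (LINT x:A|M. f x)"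
    using integral_nonneg_AE[OF nonneg] by (simp add: set_lebesgue_integral_def)
  ultimately show ?thesis by simp
qed

lemma set_integral_exp_by_parts:
  fixes F F' :: "real \<Rightarrow> real"
  assumes F_deriv: "\<And>t. 0 < t \<Longrightarrow> (F has_real_derivative F' t) (at t)"
    and F_cont: "continuous_on {0..} F" and F'_cont: "continuous_on {0<..} F'"
    and F_bound: "\<And>t. 0 \<le> t \<Longrightarrow> \<bar>F t\<bar> \<le> B" and F'_bound: "\<And>t. 0 < t \<Longrightarrow> \<bar>F' t\<bar> \<le> B'"
  shows "(LINT t:{0<..}|lborel. exp (- t) * F' t) = (LINT t:{0<..}|lborel. exp (- t) * F t) - F 0"
proof -
  have F_cont': "continuous_on {0<..} F"
    using F_cont by (rule continuous_on_subset) auto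
  have int: "set_integrable lborel {0<..} (\<lambda>t. exp (- t) * F t)"
    "set_integrable lborel {0<..} (\<lambda>t. exp (- t) * F' t)"
    using set_integrable_exp_mult_bounded[OF F_cont', of B] set_integrable_exp_mult_bounded[OF F'_cont, of B']
      F_bound F'_bound by auto
  have "(LBINT t=ereal 0..\<infinity>. exp (- t) * F' t - exp (- t) * F t) = 0 - F 0"
  proof (rule interval_integral_FTC_integrable[where F="\<lambda>t. exp (- t) * F t"])
    fix t assume "ereal 0 < ereal t"
    then show "((\<lambda>t. exp (- t) * F t) has_vector_derivative exp (- t) * F' t - exp (- t) * F t) (at t)"
      unfolding has_real_derivative_iff_has_vector_derivative[symmetric]
      using F_deriv by (auto intro!: derivative_eq_intros)
    show "isCont (\<lambda>t. exp (- t) * F' t - exp (- t) * F t) t"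
      using \<open>ereal 0 < ereal t\<close> F_cont' F'_cont
      by (intro continuous_on_interior[of "{0<..}"] continuous_intros) (auto simp: interior_open)
  next
    show "set_integrable lborel (einterval (ereal 0) \<infinity>) (\<lambda>t. exp (- t) * F' t - exp (- t) * F t)"
      using set_integral_diff(1)[OF int(2,1)] by simp
    have "((\<lambda>t. exp (- t) * F t) \<longlongrightarrow> exp (- 0) * F 0) (at_right 0)"
      using continuous_on_subset[OF F_cont, of "{0..1}"]
      by (intro tendsto_intros continuous_on_Icc_at_rightD) auto
    then show "(((\<lambda>t. exp (- t) * F t) \<circ> real_of_ereal) \<longlongrightarrow> F 0) (at_right (ereal 0))"
      unfolding ereal_tendsto_simps1 by simp
    have "((\<lambda>t::real. exp (- t)) \<longlongrightarrow> 0) at_top"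
      using filterlim_compose[OF exp_at_bot filterlim_uminus_at_bot_at_top] by (simp add: o_def)
    then have "((\<lambda>t. exp (- t) * F t) \<longlongrightarrow> 0) at_top"
      by (rule tendsto_0_le[where K=B]) (use F_bound in \<open>auto simp: eventually_at_top_linorder abs_mult\<close>)
    then show "(((\<lambda>t. exp (- t) * F t) \<circ> real_of_ereal) \<longlongrightarrow> 0) (at_left \<infinity>)"
      unfolding ereal_tendsto_simps1 .
  qed simp
  then show ?thesis
    using set_integral_diff(2)[OF int(2,1)] by (simp add: interval_integral_to_infinity_eq)
qed

lemma set_integral_exp_pushforward_nonneg:
  fixes \<phi> \<phi>' f k :: "real \<Rightarrow> real" and a b :: real
  assumes \<phi>_deriv: "\<And>t. 0 < t \<Longrightarrow> (\<phi> has_real_derivative \<phi>' t) (at t)"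
    and \<phi>'_cont: "\<And>t. 0 < t \<Longrightarrow> isCont \<phi>' t"
    and \<phi>'_nonneg: "\<And>t. 0 \<le> t \<Longrightarrow> 0 \<le> \<phi>' t"
    and \<phi>_0: "(\<phi> \<longlongrightarrow> a) (at_right 0)" and \<phi>_top: "(\<phi> \<longlongrightarrow> b) at_top"
    and \<phi>_range: "\<And>t. 0 < t \<Longrightarrow> \<phi> t \<in> {a<..<b}"
    and f_cont: "continuous_on {a<..<b} f" and f_nonneg: "\<And>x. x \<in> {a<..<b} \<Longrightarrow> 0 \<le> f x"
    and f_\<phi>: "\<And>t. 0 < t \<Longrightarrow> f (\<phi> t) * \<phi>' t = exp (- t)"
    and k: "continuous_on {a..b} k" and k_nonneg: "\<And>x. x \<in> {a..b} \<Longrightarrow> 0 \<le> k x"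
  shows "set_integrable lborel {a<..<b} (\<lambda>x. k x * f x)"
    and "(LINT x:{a<..<b}|lborel. k x * f x) = (LINT t:{0<..}|lborel. exp (- t) * k (\<phi> t))"
proof -
  have "a < b" using \<phi>_range[of 1] by simp
  obtain C where C: "\<And>x. x \<in> {a..b} \<Longrightarrow> \<bar>k x\<bar> \<le> C"
    using continuous_on_compact_abs_bound[OF compact_Icc k] by blast
  have "continuous_on {0<..} \<phi>"
    using \<phi>_deriv by (intro continuous_at_imp_continuous_on) (auto intro: DERIV_isCont)
  then have k_\<phi>: "continuous_on {0<..} (\<lambda>t. k (\<phi> t))"
    using \<phi>_range by (intro continuous_on_compose2[OF k]) (auto simp: less_imp_le)
  have kf_cont: "continuous_on {a<..<b} (\<lambda>x. k x * f x)"
    using continuous_on_subset[OF k, of "{a<..<b}"] f_cont by (intro continuous_intros) fastforce+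
  have lim_0: "((ereal \<circ> \<phi> \<circ> real_of_ereal) \<longlongrightarrow> ereal a) (at_right (ereal 0))"
    using \<phi>_0 unfolding comp_assoc[symmetric] ereal_tendsto_simps1 ereal_tendsto_simps2 .
  have lim_top: "((ereal \<circ> \<phi> \<circ> real_of_ereal) \<longlongrightarrow> ereal b) (at_left \<infinity>)"
    using \<phi>_top unfolding comp_assoc[symmetric] ereal_tendsto_simps1 ereal_tendsto_simps2 .
  have "set_integrable lborel {0<..} (\<lambda>t. exp (- t) * k (\<phi> t))"
    using C \<phi>_range by (intro set_integrable_exp_mult_bounded[OF k_\<phi>, of C]) fastforce
  then have t_int: "set_integrable lborel (einterval (ereal 0) \<infinity>) (\<lambda>t. k (\<phi> t) * f (\<phi> t) * \<phi>' t)"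
    by (rule set_integrable_cong[THEN iffD1, rotated -1]) (auto simp: f_\<phi>[symmetric] mult.assoc)
  note subst = interval_integral_substitution_nonneg[where f="\<lambda>x. k x * f x", OF _ _ _ _ _ _ lim_0 lim_top t_int]
  have kf_isCont: "isCont (\<lambda>x. k x * f x) (\<phi> t)" if "0 < t" for t
    using kf_cont \<phi>_range[OF that] by (simp add: continuous_on_eq_continuous_at)
  have kf_nonneg: "0 \<le> k (\<phi> t) * f (\<phi> t)" if "0 < t" for t
    using \<phi>_range[OF that] by (intro mult_nonneg_nonneg k_nonneg f_nonneg) auto
  show "set_integrable lborel {a<..<b} (\<lambda>x. k x * f x)"
    using subst(1) \<phi>_deriv \<phi>'_cont \<phi>'_nonneg kf_isCont kf_nonneg by simp
  have "(LBINT x=ereal a..ereal b. k x * f x) = (LBINT t=ereal 0..\<infinity>. k (\<phi> t) * f (\<phi> t) * \<phi>' t)"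
    using subst(2) \<phi>_deriv \<phi>'_cont \<phi>'_nonneg kf_isCont kf_nonneg by simp
  also have "\<dots> = (LINT t:{0<..}|lborel. exp (- t) * k (\<phi> t))"
    unfolding interval_integral_to_infinity_eq
    by (rule set_lebesgue_integral_cong) (auto simp: f_\<phi>[symmetric] mult.assoc)
  finally show "(LINT x:{a<..<b}|lborel. k x * f x) = (LINT t:{0<..}|lborel. exp (- t) * k (\<phi> t))"
    using \<open>a < b\<close> by (simp add: interval_integral_Ioo)
qed

lemma set_integral_exp_pushforward:
  fixes \<phi> \<phi>' f h :: "real \<Rightarrow> real" and a b :: real
  assumes \<phi>_deriv: "\<And>t. 0 < t \<Longrightarrow> (\<phi> has_real_derivative \<phi>' t) (at t)"
    and \<phi>'_cont: "\<And>t. 0 < t \<Longrightarrow> isCont \<phi>' t"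
    and \<phi>'_nonneg: "\<And>t. 0 \<le> t \<Longrightarrow> 0 \<le> \<phi>' t"
    and \<phi>_0: "(\<phi> \<longlongrightarrow> a) (at_right 0)" and \<phi>_top: "(\<phi> \<longlongrightarrow> b) at_top"
    and \<phi>_range: "\<And>t. 0 < t \<Longrightarrow> \<phi> t \<in> {a<..<b}"
    and f_cont: "continuous_on {a<..<b} f" and f_nonneg: "\<And>x. x \<in> {a<..<b} \<Longrightarrow> 0 \<le> f x"
    and f_\<phi>: "\<And>t. 0 < t \<Longrightarrow> f (\<phi> t) * \<phi>' t = exp (- t)"
    and h: "continuous_on {a..b} h"
  shows "set_integrable lborel {a<..<b} (\<lambda>x. h x * f x)"
    and "(LINT x:{a<..<b}|lborel. h x * f x) = (LINT t:{0<..}|lborel. exp (- t) * h (\<phi> t))"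
proof -
  obtain C where C: "\<And>x. x \<in> {a..b} \<Longrightarrow> \<bar>h x\<bar> \<le> C"
    using continuous_on_compact_abs_bound[OF compact_Icc h] by blast
  have "C \<ge> 0"
    using C[of a] \<phi>_range[of 1] by auto
  have law: "set_integrable lborel {a<..<b} (\<lambda>x. k x * f x)
      \<and> (LINT x:{a<..<b}|lborel. k x * f x) = (LINT t:{0<..}|lborel. exp (- t) * k (\<phi> t))"
    if "continuous_on {a..b} k" "\<And>x. x \<in> {a..b} \<Longrightarrow> 0 \<le> k x" for k
    using set_integral_exp_pushforward_nonneg[where k=k, OF \<phi>_deriv \<phi>'_cont \<phi>'_nonneg \<phi>_0 \<phi>_top \<phi>_range
        f_cont f_nonneg f_\<phi> that] by blast
  have "0 \<le> h x + C" if "x \<in> {a..b}" for x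
    using C[OF that] by (simp add: abs_le_iff)
  then have hyps: "continuous_on {a..b} (\<lambda>x. h x + C)" "\<And>x. x \<in> {a..b} \<Longrightarrow> 0 \<le> h x + C"
    using h by (auto intro!: continuous_intros)
  have eq: "h x * f x = (h x + C) * f x - C * f x" for x
    by (simp add: algebra_simps)
  have plus: "set_integrable lborel {a<..<b} (\<lambda>x. (h x + C) * f x)"
      "(LINT x:{a<..<b}|lborel. (h x + C) * f x) = (LINT t:{0<..}|lborel. exp (- t) * (h (\<phi> t) + C))"
    using law[OF hyps] by blast+
  have const: "set_integrable lborel {a<..<b} (\<lambda>x. C * f x)"
      "(LINT x:{a<..<b}|lborel. C * f x) = (LINT t:{0<..}|lborel. exp (- t) * C)"
    using law[of "\<lambda>_. C", OF continuous_on_const \<open>C \<ge> 0\<close>] by blast+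
  show "set_integrable lborel {a<..<b} (\<lambda>x. h x * f x)"
    unfolding eq using plus(1) const(1) by (rule set_integral_diff(1))
  have "continuous_on {0<..} \<phi>"
    using \<phi>_deriv by (intro continuous_at_imp_continuous_on) (auto intro: DERIV_isCont)
  then have "continuous_on {0<..} (\<lambda>t. h (\<phi> t))"
    using \<phi>_range by (intro continuous_on_compose2[OF h]) (auto simp: less_imp_le)
  moreover have "\<bar>h (\<phi> t)\<bar> \<le> C" if "0 < t" for t
    using \<phi>_range[OF that] by (intro C) auto
  ultimately have "set_integrable lborel {0<..} (\<lambda>t. exp (- t) * h (\<phi> t))"
    by (rule set_integrable_exp_mult_bounded)
  moreover have "set_integrable lborel {0<..} (\<lambda>t. exp (- t) * C)"
    using set_integrable_exp_mult_bounded[of "\<lambda>_. C" C] \<open>C \<ge> 0\<close> by simp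
  ultimately have "(LINT t:{0<..}|lborel. exp (- t) * (h (\<phi> t) + C)) - (LINT t:{0<..}|lborel. exp (- t) * C)
      = (LINT t:{0<..}|lborel. exp (- t) * h (\<phi> t))"
    by (simp add: distrib_left)
  then show "(LINT x:{a<..<b}|lborel. h x * f x) = (LINT t:{0<..}|lborel. exp (- t) * h (\<phi> t))"
    unfolding eq set_integral_diff(2)[OF plus(1) const(1)] plus(2) const(2) .
qed

lemma set_integral_exp_pushforward_decreasing:
  fixes \<phi> \<phi>' f h :: "real \<Rightarrow> real" and a b :: real
  assumes \<phi>_deriv: "\<And>t. 0 < t \<Longrightarrow> (\<phi> has_real_derivative \<phi>' t) (at t)"
    and \<phi>'_cont: "\<And>t. 0 < t \<Longrightarrow> isCont \<phi>' t"
    and \<phi>'_nonpos: "\<And>t. 0 \<le> t \<Longrightarrow> \<phi>' t \<le> 0"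
    and \<phi>_0: "(\<phi> \<longlongrightarrow> b) (at_right 0)" and \<phi>_top: "(\<phi> \<longlongrightarrow> a) at_top"
    and \<phi>_range: "\<And>t. 0 < t \<Longrightarrow> \<phi> t \<in> {a<..<b}"
    and f_cont: "continuous_on {a<..<b} f" and f_nonneg: "\<And>x. x \<in> {a<..<b} \<Longrightarrow> 0 \<le> f x"
    and f_\<phi>: "\<And>t. 0 < t \<Longrightarrow> f (\<phi> t) * - \<phi>' t = exp (- t)"
    and h: "continuous_on {a..b} h"
  shows "set_integrable lborel {a<..<b} (\<lambda>x. h x * f x)"
    and "(LINT x:{a<..<b}|lborel. h x * f x) = (LINT t:{0<..}|lborel. exp (- t) * h (\<phi> t))"
proof -
  have uminus_Ioo: "{x. - x \<in> {a<..<b}} = {- b<..<- a}"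
    by auto
  have "continuous_on {- b<..<- a} (\<lambda>x. f (- x))" "continuous_on {- b..- a} (\<lambda>x. h (- x))"
    by (auto intro!: continuous_on_compose2[OF f_cont] continuous_on_compose2[OF h] continuous_intros)
  note reflected = set_integral_exp_pushforward[where \<phi>="\<lambda>t. - \<phi> t" and \<phi>'="\<lambda>t. - \<phi>' t"
      and f="\<lambda>x. f (- x)" and h="\<lambda>x. h (- x)" and a="- b" and b="- a", OF _ _ _ _ _ _ this(1) _ _ this(2)]
  have hyps: "\<And>t. 0 < t \<Longrightarrow> ((\<lambda>t. - \<phi> t) has_real_derivative - \<phi>' t) (at t)"
    "\<And>t. 0 < t \<Longrightarrow> isCont (\<lambda>t. - \<phi>' t) t" "\<And>t. 0 \<le> t \<Longrightarrow> 0 \<le> - \<phi>' t"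
    "((\<lambda>t. - \<phi> t) \<longlongrightarrow> - b) (at_right 0)" "((\<lambda>t. - \<phi> t) \<longlongrightarrow> - a) at_top"
    "\<And>t. 0 < t \<Longrightarrow> - \<phi> t \<in> {- b<..<- a}" "\<And>x. x \<in> {- b<..<- a} \<Longrightarrow> 0 \<le> f (- x)"
    "\<And>t. 0 < t \<Longrightarrow> f (- (- \<phi> t)) * - \<phi>' t = exp (- t)"
    using \<phi>_deriv \<phi>'_cont \<phi>'_nonpos \<phi>_0 \<phi>_top \<phi>_range f_nonneg f_\<phi>
    by (auto intro: DERIV_minus tendsto_minus)
  have "set_integrable lborel {- b<..<- a} (\<lambda>x. h (- x) * f (- x))"
    using reflected(1)[OF hyps] .
  then show "set_integrable lborel {a<..<b} (\<lambda>x. h x * f x)"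
    unfolding set_integrable_def
    using lborel_integrable_real_affine_iff[of "- 1" "\<lambda>x. indicator {a<..<b} x *\<^sub>R (h x * f x)" 0]
    by (simp add: indicator_def uminus_Ioo[symmetric])
  have "(LINT x:{a<..<b}|lborel. h x * f x) = (LINT x:{- b<..<- a}|lborel. h (- x) * f (- x))"
    unfolding set_integral_reflect[of "{a<..<b}"] uminus_Ioo ..
  also have "\<dots> = (LINT t:{0<..}|lborel. exp (- t) * h (\<phi> t))"
    using reflected(2)[OF hyps] by simp
  finally show "(LINT x:{a<..<b}|lborel. h x * f x) = (LINT t:{0<..}|lborel. exp (- t) * h (\<phi> t))" .
qed

section \<open>Distributions on a compact set determined by moments\<close>

lemma set_integrable_continuous_on_compact:
  fixes M :: "'a::t2_space measure" and h :: "'a \<Rightarrow> real"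
  assumes M: "finite_measure M" "sets M = sets borel" and K: "compact K" and h: "continuous_on K h"
  shows "set_integrable M K h"
proof -
  obtain C where C: "\<And>x. x \<in> K \<Longrightarrow> \<bar>h x\<bar> \<le> C"
    using continuous_on_compact_abs_bound[OF K h] by blast
  have "(\<lambda>x. indicator K x *\<^sub>R h x) \<in> borel_measurable M"
    using borel_measurable_continuous_on_indicator[OF borel_compact[OF K] h]
    by (simp add: measurable_cong_sets[OF M(2) refl])
  then show ?thesis
    unfolding set_integrable_def using C
    by (intro finite_measure.integrable_const_bound[OF M(1), where B="\<bar>C\<bar>"] AE_I2)
      (auto split: split_indicator intro: order_trans[OF _ abs_ge_self])
qed

lemma full_measure_set:
  fixes M :: "real measure"
  assumes M: "prob_space M" "sets M = sets borel" and A: "A \<in> sets borel" "emeasure M A = 1"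
  shows "AE x in M. x \<in> A" and "(LINT x:A|M. c) = (c :: real)"
proof -
  interpret prob_space M by fact
  have "space M = UNIV"
    using sets_eq_imp_space_eq[OF M(2)] by simp
  then show "AE x in M. x \<in> A"
    using A M(2) by (intro AE_I_eq_1) auto
  show "(LINT x:A|M. c) = c"
    using set_integral_const[of A M c] A M(2) by (simp add: emeasure_eq_measure)
qed

lemma polynomial_comp_uniform_approx:
  fixes \<phi> h :: "real \<Rightarrow> real"
  assumes K: "compact K" and \<phi>: "continuous_on K \<phi>" "inj_on \<phi> K" and h: "continuous_on K h" and "e > 0"
  obtains a n where "\<And>x. x \<in> K \<Longrightarrow> \<bar>h x - (\<Sum>i\<le>n. a i * \<phi> x ^ i)\<bar> \<le> e"
proof -
  \<comment> \<open>Stone--Weierstrass for \<open>h \<circ> \<phi>\<inverse>\<close>, which is continuous on the compact set \<open>\<phi> ` K\<close>\<close>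
  have "continuous_on (\<phi> ` K) (\<lambda>z. h (inv_into K \<phi> z))"
    using continuous_on_inv[OF \<phi>(1) K] \<phi>(2) h by (intro continuous_on_compose2[OF h]) auto
  then obtain p where "polynomial_function p" and p: "\<forall>z\<in>\<phi> ` K. \<bar>h (inv_into K \<phi> z) - p z\<bar> < e"
    using Stone_Weierstrass_polynomial_function[OF compact_continuous_image[OF \<phi>(1) K]] \<open>e > 0\<close>
    by fastforce
  then obtain a n where "p = (\<lambda>z. \<Sum>i\<le>n. a i * z ^ i)"
    unfolding real_polynomial_function_eq[symmetric] real_polynomial_function_iff_sum by blast
  then show ?thesis
    using p \<phi>(2) by (intro that[of a n]) (force simp: inv_into_f_f)
qed

lemma set_integral_polynomial_comp:
  fixes L :: "real measure" and \<phi> :: "real \<Rightarrow> real"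
  assumes L: "finite_measure L" "sets L = sets borel" and K: "compact K" and \<phi>: "continuous_on K \<phi>"
  shows "(LINT x:K|L. \<Sum>i\<le>n. a i * \<phi> x ^ i) = (\<Sum>i\<le>n. a i * (LINT x:K|L. \<phi> x ^ i))"
proof -
  have "continuous_on K (\<lambda>x. a i * \<phi> x ^ i)" for i
    using \<phi> by (intro continuous_intros)
  then have "integrable L (\<lambda>x. indicator K x *\<^sub>R (a i * \<phi> x ^ i))" for i
    using set_integrable_continuous_on_compact[OF L K] unfolding set_integrable_def by blast
  then show ?thesis
    unfolding set_lebesgue_integral_def scaleR_sum_right
    by (simp add: Bochner_Integration.integral_sum mult.left_commute)
qed

lemma set_integral_abs_diff_le:
  fixes L :: "real measure" and h q :: "real \<Rightarrow> real"
  assumes L: "finite_measure L" "sets L = sets borel" and K: "compact K"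
    and h: "continuous_on K h" and q: "continuous_on K q" and hq: "\<And>x. x \<in> K \<Longrightarrow> \<bar>h x - q x\<bar> \<le> e"
  shows "\<bar>(LINT x:K|L. h x) - (LINT x:K|L. q x)\<bar> \<le> e * measure L K"
proof -
  have int: "set_integrable L K h" "set_integrable L K q"
    using set_integrable_continuous_on_compact[OF L K] h q by auto
  have "\<bar>(LINT x:K|L. h x) - (LINT x:K|L. q x)\<bar> = \<bar>LINT x:K|L. h x - q x\<bar>"
    using set_integral_diff(2)[OF int] by simp
  also have "\<dots> \<le> (LINT x:K|L. \<bar>h x - q x\<bar>)"
    using set_integral_norm_bound[OF set_integral_diff(1)[OF int]] by simp
  also have "\<dots> \<le> (LINT x:K|L. e)"
    using set_integral_diff(1)[OF int] hq L K
    by (intro set_integral_mono) (auto intro: set_integrable_continuous_on_compact continuous_intros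
        simp: set_integrable_abs)
  also have "\<dots> = e * measure L K"
    using L K by (simp add: set_integral_const finite_measure.emeasure_finite borel_compact)
  finally show ?thesis .
qed

lemma set_integral_continuous_eq_if_moments_eq:
  fixes M N :: "real measure" and \<phi> h :: "real \<Rightarrow> real"
  assumes M: "finite_measure M" "sets M = sets borel" and N: "finite_measure N" "sets N = sets borel"
    and K: "compact K" and \<phi>: "continuous_on K \<phi>" "inj_on \<phi> K"
    and moments: "\<And>n. (LINT x:K|M. \<phi> x ^ n) = (LINT x:K|N. \<phi> x ^ n)"
    and h: "continuous_on K h"
  shows "(LINT x:K|M. h x) = (LINT x:K|N. h x)"
proof -
  define S where "S = measure M K + measure N K"
  have "S \<ge> 0" unfolding S_def by simp
  have "\<bar>(LINT x:K|M. h x) - (LINT x:K|N. h x)\<bar> \<le> 0"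
  proof (rule field_le_epsilon)
    fix e :: real assume "0 < e"
    then have "0 < e / (S + 1)"
      using \<open>S \<ge> 0\<close> by simp
    then obtain a n where approx: "\<And>x. x \<in> K \<Longrightarrow> \<bar>h x - (\<Sum>i\<le>n. a i * \<phi> x ^ i)\<bar> \<le> e / (S + 1)"
      using polynomial_comp_uniform_approx[OF K \<phi> h] by blast
    have q_cont: "continuous_on K (\<lambda>x. \<Sum>i\<le>n. a i * \<phi> x ^ i)"
      using \<phi>(1) by (intro continuous_intros)
    have "(LINT x:K|M. \<Sum>i\<le>n. a i * \<phi> x ^ i) = (LINT x:K|N. \<Sum>i\<le>n. a i * \<phi> x ^ i)"
      unfolding set_integral_polynomial_comp[OF M K \<phi>(1)] set_integral_polynomial_comp[OF N K \<phi>(1)] moments ..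
    then have "\<bar>(LINT x:K|M. h x) - (LINT x:K|N. h x)\<bar> \<le> e / (S + 1) * S"
      using set_integral_abs_diff_le[OF M K h q_cont approx] set_integral_abs_diff_le[OF N K h q_cont approx]
      unfolding S_def by (simp add: distrib_left)
    also have "\<dots> \<le> e"
      using \<open>S \<ge> 0\<close> \<open>0 < e\<close> by (simp add: field_simps)
    finally show "\<bar>(LINT x:K|M. h x) - (LINT x:K|N. h x)\<bar> \<le> 0 + e" by simp
  qed
  then show ?thesis by simp
qed

text \<open>A constant sequence converging weakly to \<open>N\<close> forces equal characteristic functions.\<close>

lemma real_distribution_eqI_bounded_continuous:
  assumes M: "real_distribution M" and N: "real_distribution N"
    and eq: "\<And>f :: real \<Rightarrow> real. (\<And>x. isCont f x) \<Longrightarrow> (\<And>x. \<bar>f x\<bar> \<le> 1) \<Longrightarrow>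
      integral\<^sup>L M f = integral\<^sup>L N f"
  shows "M = N"
proof (rule Levy_uniqueness[OF M N])
  have "weak_conv_m (\<lambda>_. M) N"
  proof (rule integral_bdd_continuous_conv_imp_weak_conv[OF M N])
    fix f :: "real \<Rightarrow> real" assume "\<And>x. isCont f x" "\<And>x. \<bar>f x\<bar> \<le> 1"
    then show "(\<lambda>n. integral\<^sup>L M f) \<longlonglongrightarrow> integral\<^sup>L N f"
      using eq[of f] by simp
  qed
  then have "(\<lambda>n. char M t) \<longlonglongrightarrow> char N t" for t
    using M N by (intro levy_continuity1[of "\<lambda>_. M"])
  then show "char M = char N"
    by (auto simp: LIMSEQ_const_iff)
qed

lemma real_distribution_eqI_moments:
  fixes M N :: "real measure" and \<phi> :: "real \<Rightarrow> real"
  assumes M: "real_distribution M" "AE x in M. x \<in> K" and N: "real_distribution N" "AE x in N. x \<in> K"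
    and K: "compact K" and \<phi>: "continuous_on K \<phi>" "inj_on \<phi> K"
    and moments: "\<And>n. (LINT x:K|M. \<phi> x ^ n) = (LINT x:K|N. \<phi> x ^ n)"
  shows "M = N"
proof (rule real_distribution_eqI_bounded_continuous[OF M(1) N(1)])
  fix f :: "real \<Rightarrow> real" assume f: "\<And>x. isCont f x"
  then have f_meas: "f \<in> borel_measurable borel"
    by (intro borel_measurable_continuous_onI continuous_at_imp_continuous_on) auto
  have restrict: "integral\<^sup>L L f = (LINT x:K|L. f x)" if "real_distribution L" "AE x in L. x \<in> K" for L
  proof -
    interpret real_distribution L by fact
    have [measurable]: "f \<in> borel_measurable L" "K \<in> sets L"
      using f_meas borel_compact[OF K] by (simp_all add: measurable_cong_sets[OF events_eq_borel refl])
    show ?thesis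
      unfolding set_lebesgue_integral_def using that(2) by (intro integral_cong_AE) auto
  qed
  have fin: "finite_measure L" "sets L = sets borel" if "real_distribution L" for L
    using that real_distribution.events_eq_borel[OF that] by (auto simp: real_distribution_def prob_space_def)
  have "(LINT x:K|M. f x) = (LINT x:K|N. f x)"
    using fin[OF M(1)] fin[OF N(1)] f
    by (intro set_integral_continuous_eq_if_moments_eq[OF _ _ _ _ K \<phi> moments])
      (auto simp: continuous_at_imp_continuous_on)
  then show "integral\<^sup>L M f = integral\<^sup>L N f"
    using restrict M N by simp
qed

section \<open>The flow between replacements\<close>

locale star_model =
  fixes \<theta>1 \<theta>2 \<beta> :: real
  assumes \<theta>1_pos: "\<theta>1 > 0" and \<theta>2_pos: "\<theta>2 > 0" and \<beta>_pos: "\<beta> > 0"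
begin

abbreviation "r1 \<equiv> root1 \<theta>1 \<theta>2 \<beta>"
abbreviation "r2 \<equiv> root2 \<theta>1 \<theta>2 \<beta>"
abbreviation "v \<equiv> drift \<theta>1 \<theta>2 \<beta>"

lemma roots_bounds: "0 < r1" "r1 < 1" "r2 < 0"
proof -
  define \<phi> where "\<phi> = phi \<theta>1 \<theta>2 \<beta>"
  define p where "p = pp \<theta>1 \<theta>2"
  have "\<phi> > 0" "0 < p" "p < 1"
    using \<theta>1_pos \<theta>2_pos \<beta>_pos by (auto simp: \<phi>_def p_def phi_def pp_def field_simps)
  then have "(1 - \<phi>)\<^sup>2 < (1 - \<phi>)\<^sup>2 + 4 * \<phi> * p" "(1 - \<phi>)\<^sup>2 + 4 * \<phi> * p < (1 + \<phi>)\<^sup>2"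
    by (auto simp: power2_eq_square algebra_simps)
  then have "\<bar>1 - \<phi>\<bar> < sqrt ((1 - \<phi>)\<^sup>2 + 4 * \<phi> * p)" "sqrt ((1 - \<phi>)\<^sup>2 + 4 * \<phi> * p) < 1 + \<phi>"
    using real_sqrt_less_mono \<open>\<phi> > 0\<close> by (metis real_sqrt_abs, metis real_sqrt_abs abs_of_pos add_pos_pos zero_less_one)
  then show "0 < r1" "r1 < 1" "r2 < 0"
    unfolding root1_def root2_def \<phi>_def[symmetric] p_def[symmetric] by (auto simp: abs_less_iff)
qed

lemma drift_eq: "v x = - (\<beta> / 2) * ((x - r1) * (x - r2))"
proof -
  define \<phi> where "\<phi> = phi \<theta>1 \<theta>2 \<beta>"
  define p where "p = pp \<theta>1 \<theta>2"
  have "\<phi> > 0" "0 < p"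
    using \<theta>1_pos \<theta>2_pos \<beta>_pos by (auto simp: \<phi>_def p_def phi_def pp_def)
  define D where "D = sqrt ((1 - \<phi>)\<^sup>2 + 4 * \<phi> * p)"
  have D2: "D\<^sup>2 = (1 - \<phi>)\<^sup>2 + 4 * \<phi> * p"
    unfolding D_def using \<open>\<phi> > 0\<close> \<open>0 < p\<close> by (intro real_sqrt_pow2) auto
  have r: "r1 = (1 - \<phi> + D) / 2" "r2 = (1 - \<phi> - D) / 2"
    by (simp_all add: root1_def root2_def D_def \<phi>_def p_def)
  have "(x - r1) * (x - r2) = (x - (1 - \<phi>) / 2)\<^sup>2 - D\<^sup>2 / 4"
    unfolding r by (simp add: power2_eq_square field_simps)
  also have "\<dots> = x\<^sup>2 - (1 - \<phi>) * x - \<phi> * p"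
    unfolding D2 by (simp add: power2_eq_square field_simps)
  also have "\<phi> * p = \<theta>1 / \<beta>"
    using \<theta>1_pos \<theta>2_pos by (simp add: \<phi>_def p_def phi_def pp_def)
  finally have "- (\<beta> / 2) * ((x - r1) * (x - r2))
      = - (\<beta> / 2) * (x\<^sup>2 - (1 - (\<theta>1 + \<theta>2) / \<beta>) * x - \<theta>1 / \<beta>)"
    by (simp add: \<phi>_def phi_def)
  also have "\<dots> = v x"
    using \<beta>_pos by (simp add: drift_def field_simps power2_eq_square)
  finally show ?thesis ..
qed

lemma continuous_on_drift: "continuous_on S v"
  unfolding drift_def by (auto intro!: continuous_intros)

text \<open>\<open>ycoord\<close> decays exponentially along the flow (\<open>drift_times_ycoord_deriv\<close>), \<open>xcoord\<close> is its
  inverse, and \<open>flow e\<close> is the solution of \<open>x' = v x\<close> started at \<open>e\<close>.\<close>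

definition rate :: real where
  "rate = \<beta> * (r1 - r2) / 2"

definition ycoord :: "real \<Rightarrow> real" where
  "ycoord x = (x - r1) / (x - r2)"

definition xcoord :: "real \<Rightarrow> real" where
  "xcoord z = r1 + (r1 - r2) * (z / (1 - z))"

definition flow :: "real \<Rightarrow> real \<Rightarrow> real" where
  "flow e t = xcoord (ycoord e * exp (- rate * t))"

lemma rate_pos: "rate > 0"
  using roots_bounds \<beta>_pos by (simp add: rate_def)

lemma ycoord_eq: "r2 < x \<Longrightarrow> ycoord x = 1 - (r1 - r2) / (x - r2)"
  by (simp add: ycoord_def field_simps)

lemma ycoord_less_iff:
  assumes "r2 < x" "r2 < x'"
  shows "ycoord x < ycoord x' \<longleftrightarrow> x < x'"
proof -
  have "ycoord x' - ycoord x = (r1 - r2) * (x' - x) / ((x - r2) * (x' - r2))"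
    using assms by (simp add: ycoord_def field_simps)
  moreover have "0 < (x - r2) * (x' - r2)" "0 < r1 - r2"
    using assms roots_bounds by auto
  ultimately show ?thesis
    by (smt (verit) divide_pos_pos zero_less_mult_iff mult_le_0_iff divide_nonpos_pos)
qed

lemma ycoord_r1 [simp]: "ycoord r1 = 0"
  by (simp add: ycoord_def)

lemma ycoord_less_1: "r2 < x \<Longrightarrow> ycoord x < 1"
  using roots_bounds by (simp add: ycoord_eq)

lemma continuous_on_ycoord: "continuous_on {0..1} ycoord"
  unfolding ycoord_def using roots_bounds by (intro continuous_intros) auto

lemma inj_on_ycoord: "inj_on ycoord {0..1}"
proof (rule inj_onI)
  fix x x' :: real assume "x \<in> {0..1}" "x' \<in> {0..1}" "ycoord x = ycoord x'"
  then show "x = x'"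
    using ycoord_less_iff[of x x'] ycoord_less_iff[of x' x] roots_bounds
    by (cases x x' rule: linorder_cases) auto
qed

lemma xcoord_ycoord: "x \<noteq> r2 \<Longrightarrow> xcoord (ycoord x) = x"
proof -
  assume "x \<noteq> r2"
  then have "1 - ycoord x = (r1 - r2) / (x - r2)"
    by (simp add: ycoord_def field_simps)
  then have "ycoord x / (1 - ycoord x) = (x - r1) / (r1 - r2)"
    using \<open>x \<noteq> r2\<close> roots_bounds by (simp add: ycoord_def)
  then show ?thesis
    using roots_bounds by (simp add: xcoord_def)
qed

lemma ycoord_xcoord: "z \<noteq> 1 \<Longrightarrow> ycoord (xcoord z) = z"
proof -
  assume "z \<noteq> 1"
  then have "xcoord z - r1 = (r1 - r2) * z / (1 - z)" "xcoord z - r2 = (r1 - r2) / (1 - z)"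
    by (simp_all add: xcoord_def field_simps)
  then show ?thesis
    using \<open>z \<noteq> 1\<close> roots_bounds by (simp add: ycoord_def)
qed

lemma xcoord_greater: "z < 1 \<Longrightarrow> r2 < xcoord z"
proof -
  assume "z < 1"
  then have "xcoord z = r2 + (r1 - r2) / (1 - z)"
    by (simp add: xcoord_def field_simps)
  then show ?thesis
    using \<open>z < 1\<close> roots_bounds by simp
qed

lemma ycoord_deriv: "x \<noteq> r2 \<Longrightarrow> (ycoord has_real_derivative (r1 - r2) / (x - r2)\<^sup>2) (at x)"
  unfolding ycoord_def[abs_def]
  by (auto intro!: derivative_eq_intros simp: power2_eq_square field_simps)

lemma drift_times_ycoord_deriv: "x \<noteq> r2 \<Longrightarrow> v x * ((r1 - r2) / (x - r2)\<^sup>2) = - rate * ycoord x"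
  by (simp add: drift_eq rate_def ycoord_def power2_eq_square)

lemma xcoord_deriv: "z \<noteq> 1 \<Longrightarrow> (xcoord has_real_derivative (r1 - r2) / (1 - z)\<^sup>2) (at z)"
  unfolding xcoord_def[abs_def]
  by (auto intro!: derivative_eq_intros simp: power2_eq_square field_simps)

lemma flow_arg_less_1:
  assumes "r2 < e" "0 \<le> t"
  shows "ycoord e * exp (- rate * t) < 1"
proof (cases "ycoord e \<ge> 0")
  case True
  have "exp (- rate * t) \<le> 1"
    using rate_pos assms(2) by simp
  then have "ycoord e * exp (- rate * t) \<le> ycoord e"
    using True by (simp add: mult_left_le)
  then show ?thesis
    using ycoord_less_1[OF assms(1)] by simp
next
  case False
  then have "ycoord e * exp (- rate * t) < 0"
    by (intro mult_neg_pos) auto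
  then show ?thesis
    by simp
qed

lemma ycoord_flow: "r2 < e \<Longrightarrow> 0 \<le> t \<Longrightarrow> ycoord (flow e t) = ycoord e * exp (- rate * t)"
  unfolding flow_def using flow_arg_less_1[of e t] by (intro ycoord_xcoord) simp

lemma flow_greater_r2: "r2 < e \<Longrightarrow> 0 \<le> t \<Longrightarrow> r2 < flow e t"
  unfolding flow_def using flow_arg_less_1[of e t] by (intro xcoord_greater)

lemma flow_0: "r2 < e \<Longrightarrow> flow e 0 = e"
  by (simp add: flow_def xcoord_ycoord)

lemma flow_deriv:
  assumes "r2 < e" "0 \<le> t"
  shows "(flow e has_real_derivative v (flow e t)) (at t)"
proof -
  define q where "q = ycoord e * exp (- rate * t)"
  have "q < 1"
    unfolding q_def using flow_arg_less_1[OF assms] .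
  have "((\<lambda>t. ycoord e * exp (- rate * t)) has_real_derivative - rate * q) (at t)"
    unfolding q_def by (auto intro!: derivative_eq_intros)
  from DERIV_chain2[OF xcoord_deriv this] \<open>q < 1\<close>
  have "(flow e has_real_derivative (r1 - r2) / (1 - q)\<^sup>2 * (- rate * q)) (at t)"
    unfolding flow_def[abs_def] q_def by simp
  moreover have "flow e t - r1 = (r1 - r2) * q / (1 - q)" "flow e t - r2 = (r1 - r2) / (1 - q)"
    using \<open>q < 1\<close> by (simp_all add: flow_def xcoord_def q_def field_simps)
  then have "v (flow e t) = (r1 - r2) / (1 - q)\<^sup>2 * (- rate * q)"
    unfolding drift_eq rate_def by (simp add: power2_eq_square ac_simps)
  ultimately show ?thesis
    by simp
qed

lemma flow_eq_ode_solution: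
  assumes "r2 < e"
    and x: "\<And>t. t \<ge> 0 \<Longrightarrow> (x has_real_derivative v (x t)) (at t within {0..})" and "x 0 = e" and "t \<ge> 0"
  shows "x t = flow e t"
proof (rule quadratic_ode_unique[where x=x and z="flow e" and T=t and c="- \<beta> / 2" and a=r1 and b=r2])
  show "\<And>t. t \<ge> 0 \<Longrightarrow> (flow e has_real_derivative - \<beta> / 2 * (flow e t - r1) * (flow e t - r2)) (at t within {0..})"
    using flow_deriv[OF \<open>r2 < e\<close>] by (auto intro: has_field_derivative_at_within simp: drift_eq mult.assoc)
  show "x 0 = flow e 0"
    using flow_0 \<open>r2 < e\<close> \<open>x 0 = e\<close> by simp
qed (use x assms in \<open>auto simp: drift_eq mult.assoc\<close>)

lemma mu_formula_eq_flow: "mu_formula \<theta>1 \<theta>2 \<beta> t = flow 1 t"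
  and nu_formula_eq_flow: "nu_formula \<theta>1 \<theta>2 \<beta> t = flow 0 t"
  by (simp_all add: mu_formula_def nu_formula_def flow_def xcoord_def ycoord_def rate_def Let_def)

lemma flow_continuous_on: "r2 < e \<Longrightarrow> continuous_on {0..} (flow e)"
  using flow_deriv by (intro continuous_at_imp_continuous_on) (auto intro: DERIV_isCont)

lemma flow_between:
  assumes "r2 < e" "0 < t"
  shows "r1 < e \<Longrightarrow> r1 < flow e t \<and> flow e t < e"
    and "e < r1 \<Longrightarrow> e < flow e t \<and> flow e t < r1"
proof -
  have r2: "r2 < flow e t" "r2 < r1"
    using flow_greater_r2 assms roots_bounds by auto
  have E: "0 < exp (- rate * t)" "exp (- rate * t) < 1"
    using rate_pos assms by auto
  have y: "ycoord (flow e t) = ycoord e * exp (- rate * t)"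
    using ycoord_flow assms by simp
  show "r1 < e \<Longrightarrow> r1 < flow e t \<and> flow e t < e"
    using ycoord_less_iff[OF r2(2) assms(1)] ycoord_less_iff[OF r2(2) r2(1)] ycoord_less_iff[OF r2(1) assms(1)]
      E unfolding y by (simp add: mult_less_cancel_left2)
  show "e < r1 \<Longrightarrow> e < flow e t \<and> flow e t < r1"
    using ycoord_less_iff[OF assms(1) r2(2)] ycoord_less_iff[OF r2(1) r2(2)] ycoord_less_iff[OF assms(1) r2(1)]
      E unfolding y by (simp add: mult_less_cancel_left_neg mult_neg_pos)
qed

lemma flow_r1: "flow r1 t = r1"
  by (simp add: flow_def xcoord_def)

lemma flow_in_unit_interval:
  assumes "0 \<le> e" "e \<le> 1"
  shows "0 \<le> t \<Longrightarrow> flow e t \<in> {0..1}" and "0 < t \<Longrightarrow> flow e t \<in> {0<..<1}"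
proof -
  have "r2 < e" using assms roots_bounds by simp
  show "0 < t \<Longrightarrow> flow e t \<in> {0<..<1}"
    using flow_between[OF \<open>r2 < e\<close>] assms roots_bounds flow_r1[of t]
    by (cases e r1 rule: linorder_cases) force+
  then show "0 \<le> t \<Longrightarrow> flow e t \<in> {0..1}"
    using assms flow_0[OF \<open>r2 < e\<close>] by (cases "t = 0") auto
qed

lemma flow_tendsto_0: "r2 < e \<Longrightarrow> (flow e \<longlongrightarrow> e) (at_right 0)"
  using flow_deriv[of e 0, THEN DERIV_isCont] flow_0[of e]
  by (simp add: isCont_def filterlim_at_split)

lemma flow_tendsto_r1: "(flow e \<longlongrightarrow> r1) at_top"
proof -
  have "LIM t at_top. rate * t :> at_top"
    using rate_pos by (intro filterlim_tendsto_pos_mult_at_top[OF tendsto_const] filterlim_ident)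
  then have "LIM t at_top. - rate * t :> at_bot"
    by (simp add: filterlim_uminus_at_top[symmetric])
  then have "((\<lambda>t. exp (- rate * t)) \<longlongrightarrow> 0) at_top"
    by (rule filterlim_compose[OF exp_at_bot])
  then have "((\<lambda>t. ycoord e * exp (- rate * t)) \<longlongrightarrow> 0) at_top"
    by (auto intro: tendsto_mult_right_zero)
  then have "(flow e \<longlongrightarrow> xcoord 0) at_top"
    unfolding flow_def[abs_def] xcoord_def by (intro tendsto_intros) auto
  then show ?thesis
    by (simp add: xcoord_def)
qed

lemma drift_flow_isCont: "r2 < e \<Longrightarrow> 0 \<le> t \<Longrightarrow> isCont (\<lambda>t. v (flow e t)) t"
  using flow_deriv[THEN DERIV_isCont] unfolding drift_def by (auto intro!: continuous_intros)

lemma comp_flow_deriv: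
  assumes e: "e \<in> {0..1}" and g: "\<forall>x\<in>{0..1}. (g has_real_derivative g' x) (at x within {0..1})"
    and "0 < t"
  shows "((\<lambda>t. g (flow e t)) has_real_derivative g' (flow e t) * v (flow e t)) (at t)"
proof -
  have "r2 < e" using e roots_bounds by simp
  have "flow e t \<in> {0<..<1}"
    using flow_in_unit_interval(2)[of e t] e \<open>0 < t\<close> by simp
  then have "at (flow e t) within {0..1} = at (flow e t)"
    by (intro at_within_interior) auto
  moreover have "(g has_real_derivative g' (flow e t)) (at (flow e t) within {0..1})"
    using g \<open>flow e t \<in> {0<..<1}\<close> by auto
  ultimately have "(g has_real_derivative g' (flow e t)) (at (flow e t))"
    by simp
  from DERIV_chain2[OF this flow_deriv[OF \<open>r2 < e\<close>]] \<open>0 < t\<close>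
  show ?thesis
    by simp
qed

section \<open>The position of the flow at an exponential time\<close>

text \<open>\<open>flow_density e\<close> is the density of \<open>flow e T\<close> for \<open>T ~ Exp(1)\<close>; it lives on the segment
  between \<open>r1\<close> and \<open>e\<close>.\<close>

definition flow_density :: "real \<Rightarrow> real \<Rightarrow> real" where
  "flow_density e x = 2 / \<beta> * (ycoord x / ycoord e) powr (2 / (\<beta> * (r1 - r2)) - 1)
     * (1 / (x - r2)\<^sup>2) / \<bar>ycoord e\<bar>"

lemma flow_density_nonneg: "0 \<le> flow_density e x"
  using \<beta>_pos by (simp add: flow_density_def)

lemma flow_density_continuous_on:
  assumes "\<And>x. x \<in> S \<Longrightarrow> r2 < x \<and> 0 < ycoord x / ycoord e"
  shows "continuous_on S (flow_density e)"
proof -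
  have "continuous_on S ycoord"
    unfolding ycoord_def using assms by (intro continuous_intros) force
  then show ?thesis
    unfolding flow_density_def using assms by (intro continuous_intros) force+
qed

lemma flow_density_flow:
  assumes "r2 < e" "e \<noteq> r1" "0 < t"
  shows "flow_density e (flow e t) * \<bar>v (flow e t)\<bar> = exp (- t)"
proof -
  define x E where "x = flow e t" and "E = exp (- rate * t)"
  have "x - r2 > 0"
    unfolding x_def using flow_greater_r2 assms by simp
  have "ycoord e \<noteq> 0"
    using assms roots_bounds by (simp add: ycoord_def)
  have y: "ycoord x = ycoord e * E"
    unfolding x_def E_def using ycoord_flow assms by simp
  have "v x = - rate * ycoord x * (x - r2)\<^sup>2 / (r1 - r2)"
    using drift_times_ycoord_deriv[of x] \<open>x - r2 > 0\<close> roots_bounds by (simp add: field_simps)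
  then have abs_v: "\<bar>v x\<bar> = rate * \<bar>ycoord e\<bar> * E * (x - r2)\<^sup>2 / (r1 - r2)"
    using rate_pos roots_bounds by (simp add: y E_def abs_mult)
  have dens: "flow_density e x = 2 / \<beta> * E powr (1 / rate - 1) / ((x - r2)\<^sup>2 * \<bar>ycoord e\<bar>)"
    unfolding flow_density_def y using \<open>ycoord e \<noteq> 0\<close> by (simp add: rate_def)
  have "flow_density e x * \<bar>v x\<bar> = 2 * rate / (\<beta> * (r1 - r2)) * E powr (1 / rate - 1) * E"
    unfolding dens abs_v using \<open>ycoord e \<noteq> 0\<close> \<open>x - r2 > 0\<close> roots_bounds \<beta>_pos
    by (simp add: field_simps)
  also have "2 * rate / (\<beta> * (r1 - r2)) = 1"
    using \<beta>_pos roots_bounds by (simp add: rate_def)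
  also have "1 * E powr (1 / rate - 1) * E = E powr (1 / rate)"
    by (simp add: E_def powr_diff)
  also have "\<dots> = exp (- t)"
    using rate_pos by (simp add: E_def powr_def)
  finally show ?thesis
    unfolding x_def .
qed

lemma flow_law_above:
  assumes "r1 < e" and h: "continuous_on {r1..e} h"
  shows "set_integrable lborel {r1<..<e} (\<lambda>x. h x * flow_density e x)"
    and "(LINT x:{r1<..<e}|lborel. h x * flow_density e x) = (LINT t:{0<..}|lborel. exp (- t) * h (flow e t))"
proof -
  have "r2 < e" using assms roots_bounds by simp
  have above: "r1 \<le> flow e t" if "0 \<le> t" for t
    using flow_between(1)[OF \<open>r2 < e\<close>, of t] flow_0[OF \<open>r2 < e\<close>] assms that
    by (cases "t = 0") auto
  have v_nonpos: "v (flow e t) \<le> 0" if "0 \<le> t" for t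
  proof -
    have "0 \<le> (flow e t - r1) * (flow e t - r2)"
      using above[OF that] roots_bounds by (intro mult_nonneg_nonneg) auto
    then show ?thesis
      using \<beta>_pos unfolding drift_eq by (simp add: mult_nonneg_nonneg)
  qed
  have density: "flow_density e (flow e t) * - v (flow e t) = exp (- t)" if "0 < t" for t
    using flow_density_flow[OF \<open>r2 < e\<close> _ that] v_nonpos[of t] that assms by (simp add: abs_of_nonpos)
  have "continuous_on {r1<..<e} (flow_density e)"
    using roots_bounds ycoord_less_iff[of r1] \<open>r2 < e\<close> assms
    by (intro flow_density_continuous_on) (auto intro!: divide_pos_pos)
  from set_integral_exp_pushforward_decreasing[where \<phi>'="\<lambda>t. v (flow e t)", OF _ _ v_nonpos
      flow_tendsto_0[OF \<open>r2 < e\<close>] flow_tendsto_r1 _ this _ density h]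
  show "set_integrable lborel {r1<..<e} (\<lambda>x. h x * flow_density e x)"
    and "(LINT x:{r1<..<e}|lborel. h x * flow_density e x) = (LINT t:{0<..}|lborel. exp (- t) * h (flow e t))"
    using flow_deriv[OF \<open>r2 < e\<close>] drift_flow_isCont[OF \<open>r2 < e\<close>] flow_between(1)[OF \<open>r2 < e\<close> _ assms(1)]
      flow_density_nonneg by auto
qed

lemma flow_law_below:
  assumes "r2 < e" "e < r1" and h: "continuous_on {e..r1} h"
  shows "set_integrable lborel {e<..<r1} (\<lambda>x. h x * flow_density e x)"
    and "(LINT x:{e<..<r1}|lborel. h x * flow_density e x) = (LINT t:{0<..}|lborel. exp (- t) * h (flow e t))"
proof -
  have below: "flow e t \<le> r1" if "0 \<le> t" for t
    using flow_between(2)[OF \<open>r2 < e\<close>, of t] flow_0[OF \<open>r2 < e\<close>] assms that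
    by (cases "t = 0") auto
  have v_nonneg: "0 \<le> v (flow e t)" if "0 \<le> t" for t
  proof -
    have "(flow e t - r1) * (flow e t - r2) \<le> 0"
      using below[OF that] flow_greater_r2[OF \<open>r2 < e\<close> that] by (intro mult_nonpos_nonneg) auto
    then show ?thesis
      using \<beta>_pos unfolding drift_eq by (simp add: mult_nonneg_nonpos)
  qed
  have density: "flow_density e (flow e t) * v (flow e t) = exp (- t)" if "0 < t" for t
    using flow_density_flow[OF \<open>r2 < e\<close> _ that] v_nonneg[of t] that assms by simp
  have "continuous_on {e<..<r1} (flow_density e)"
    using roots_bounds ycoord_less_iff[of _ r1] \<open>r2 < e\<close> assms
    by (intro flow_density_continuous_on) (auto intro!: divide_neg_neg)
  from set_integral_exp_pushforward[where \<phi>'="\<lambda>t. v (flow e t)", OF _ _ v_nonneg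
      flow_tendsto_0[OF \<open>r2 < e\<close>] flow_tendsto_r1 _ this _ density h]
  show "set_integrable lborel {e<..<r1} (\<lambda>x. h x * flow_density e x)"
    and "(LINT x:{e<..<r1}|lborel. h x * flow_density e x) = (LINT t:{0<..}|lborel. exp (- t) * h (flow e t))"
    using flow_deriv[OF \<open>r2 < e\<close>] drift_flow_isCont[OF \<open>r2 < e\<close>] flow_between(2)[OF \<open>r2 < e\<close> _ assms(2)]
      flow_density_nonneg by auto
qed

definition flow_mean :: "real \<Rightarrow> (real \<Rightarrow> real) \<Rightarrow> real" where
  "flow_mean e h = (LINT t:{0<..}|lborel. exp (- t) * h (flow e t))"

lemma Pbar_eq_flow_mean:
  assumes "e \<in> {0..1}" and f: "\<And>t. t \<ge> 0 \<Longrightarrow> f t = flow e t"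
  shows "Pbar f = flow_mean e (\<lambda>x. x)"
proof -
  have "r2 < e" using assms roots_bounds by simp
  have "Pbar f = (LINT t:{0..}|lborel. exp (- t) * flow e t)"
    unfolding Pbar_def using f by (intro set_lebesgue_integral_cong) auto
  also have "\<dots> = flow_mean e (\<lambda>x. x)"
    unfolding flow_mean_def using flow_continuous_on[OF \<open>r2 < e\<close>]
    by (intro set_integral_atLeast_eq_greaterThan continuous_intros)
  finally show ?thesis .
qed

lemma flow_mean_integrable:
  assumes e: "e \<in> {0..1}" and h: "continuous_on {0..1} h"
  shows "set_integrable lborel {0<..} (\<lambda>t. exp (- t) * h (flow e t))"
proof -
  obtain C where C: "\<And>x. x \<in> {0..1} \<Longrightarrow> \<bar>h x\<bar> \<le> C"
    using continuous_on_compact_abs_bound[OF compact_Icc h] by blast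
  have "r2 < e" using e roots_bounds by simp
  have range: "flow e t \<in> {0..1}" if "0 < t" for t
    using flow_in_unit_interval(1)[of e t] e that by simp
  have "continuous_on {0<..} (flow e)"
    using flow_continuous_on[OF \<open>r2 < e\<close>] by (rule continuous_on_subset) auto
  then have "continuous_on {0<..} (\<lambda>t. h (flow e t))"
    using range by (intro continuous_on_compose2[OF h]) auto
  then show ?thesis
    using C range by (intro set_integrable_exp_mult_bounded[of _ C]) simp_all
qed

lemma flow_mean_add:
  "e \<in> {0..1} \<Longrightarrow> continuous_on {0..1} h \<Longrightarrow> continuous_on {0..1} k \<Longrightarrow>
    flow_mean e (\<lambda>x. h x + k x) = flow_mean e h + flow_mean e k"
  unfolding flow_mean_def using set_integral_add(2)[OF flow_mean_integrable flow_mean_integrable]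
  by (simp add: distrib_left)

lemma flow_mean_diff:
  "e \<in> {0..1} \<Longrightarrow> continuous_on {0..1} h \<Longrightarrow> continuous_on {0..1} k \<Longrightarrow>
    flow_mean e (\<lambda>x. h x - k x) = flow_mean e h - flow_mean e k"
  unfolding flow_mean_def using set_integral_diff(2)[OF flow_mean_integrable flow_mean_integrable]
  by (simp add: right_diff_distrib)

lemma flow_mean_cmult: "flow_mean e (\<lambda>x. c * h x) = c * flow_mean e h"
  unfolding flow_mean_def by (simp add: mult.left_commute)

lemma flow_mean_const: "flow_mean e (\<lambda>_. c) = c"
proof -
  have "(LINT t:{0<..}|lborel. exp (- (t * 1))) = (1::real)"
    using LBINT_I0i_exp_mscale[of 1] by (simp add: zero_ereal_def interval_integral_to_infinity_eq)
  then show ?thesis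
    unfolding flow_mean_def by (simp add: mult.commute)
qed

lemma flow_mean_ycoord_power:
  assumes "r2 < e"
  shows "flow_mean e (\<lambda>x. ycoord x ^ n) = ycoord e ^ n / (1 + n * rate)"
proof -
  have "exp (- t) * (ycoord e * exp (- rate * t)) ^ n = ycoord e ^ n * exp (- (t * (1 + n * rate)))" for t
  proof -
    have "exp (- t) * exp (- rate * t) ^ n = exp (- t + n * (- rate * t))"
      by (simp add: exp_of_nat_mult[symmetric] exp_add[symmetric])
    also have "- t + n * (- rate * t) = - (t * (1 + n * rate))"
      by (simp add: algebra_simps)
    finally show ?thesis
      by (simp add: power_mult_distrib mult.left_commute)
  qed
  then have "flow_mean e (\<lambda>x. ycoord x ^ n) = (LINT t:{0<..}|lborel. ycoord e ^ n * exp (- (t * (1 + n * rate))))"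
    unfolding flow_mean_def using assms by (intro set_lebesgue_integral_cong) (auto simp: ycoord_flow)
  also have "\<dots> = ycoord e ^ n / (1 + n * rate)"
    using LBINT_I0i_exp_mscale[of "1 + n * rate"] rate_pos
    by (simp add: zero_ereal_def interval_integral_to_infinity_eq add_pos_nonneg)
  finally show ?thesis .
qed

lemma flow_mean_identity_bounds: "flow_mean 1 (\<lambda>x. x) \<le> 1" "0 < flow_mean 0 (\<lambda>x. x)"
proof -
  have int: "set_integrable lborel {0<..} (\<lambda>t. exp (- t) * flow e t)"
    "set_integrable lborel {0<..} (\<lambda>t. exp (- t) * (1::real))" if "e \<in> {0..1}" for e
    using flow_mean_integrable[OF that, of "\<lambda>x. x"] flow_mean_integrable[OF that, of "\<lambda>_. 1"] by simp_all
  have "flow_mean 1 (\<lambda>x. x) \<le> flow_mean 1 (\<lambda>_. 1)"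
    unfolding flow_mean_def using int[of 1] flow_in_unit_interval(1)[of 1]
    by (intro set_integral_mono) auto
  then show "flow_mean 1 (\<lambda>x. x) \<le> 1"
    by (simp add: flow_mean_const)
  have "emeasure lborel {0<..<1::real} \<le> emeasure lborel {0::real<..}"
    by (rule emeasure_mono) auto
  then have "emeasure lborel {0::real<..} \<noteq> 0"
    by auto
  then show "0 < flow_mean 0 (\<lambda>x. x)"
    unfolding flow_mean_def using int[of 0] flow_in_unit_interval(2)[of 0]
    by (intro set_integral_pos) auto
qed

lemma flow_mean_drift_times_derivative:
  assumes e: "e \<in> {0..1}"
    and g: "\<forall>x\<in>{0..1}. (g has_real_derivative g' x) (at x within {0..1})" and g': "continuous_on {0..1} g'"
  shows "flow_mean e (\<lambda>x. v x * g' x) = flow_mean e g - g e"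
proof -
  have "r2 < e" using e roots_bounds by simp
  have g_cont: "continuous_on {0..1} g"
    using g by (intro DERIV_continuous_on) blast
  have g'v_cont: "continuous_on {0..1} (\<lambda>x. g' x * v x)"
    using g' continuous_on_drift by (intro continuous_intros)
  obtain B where B: "\<And>x. x \<in> {0..1} \<Longrightarrow> \<bar>g x\<bar> \<le> B"
    using continuous_on_compact_abs_bound[OF compact_Icc g_cont] by blast
  obtain B' where B': "\<And>x. x \<in> {0..1} \<Longrightarrow> \<bar>g' x * v x\<bar> \<le> B'"
    using continuous_on_compact_abs_bound[OF compact_Icc g'v_cont] by blast
  have range: "flow e t \<in> {0..1}" if "0 \<le> t" for t
    using flow_in_unit_interval(1)[of e t] e that by simp
  then have image: "flow e ` {0..} \<subseteq> {0..1}" "flow e ` {0<..} \<subseteq> {0..1}"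
    by force+
  have flow_cont: "continuous_on {0..} (flow e)"
    by (rule flow_continuous_on[OF \<open>r2 < e\<close>])
  have "(LINT t:{0<..}|lborel. exp (- t) * (g' (flow e t) * v (flow e t)))
      = (LINT t:{0<..}|lborel. exp (- t) * g (flow e t)) - g (flow e 0)"
  proof (rule set_integral_exp_by_parts)
    show "\<And>t. 0 < t \<Longrightarrow> ((\<lambda>t. g (flow e t)) has_real_derivative g' (flow e t) * v (flow e t)) (at t)"
      by (rule comp_flow_deriv[OF e g])
    show "continuous_on {0..} (\<lambda>t. g (flow e t))"
      by (rule continuous_on_compose2[OF g_cont flow_cont image(1)])
    show "continuous_on {0<..} (\<lambda>t. g' (flow e t) * v (flow e t))"
      using continuous_on_compose2[OF g'v_cont continuous_on_subset[OF flow_cont] image(2)]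
      by (simp add: subset_eq)
  next
    fix t :: real assume "0 \<le> t"
    then show "\<bar>g (flow e t)\<bar> \<le> B"
      using B range by blast
  next
    fix t :: real assume "0 < t"
    then show "\<bar>g' (flow e t) * v (flow e t)\<bar> \<le> B'"
      using B' range by simp
  qed
  then show ?thesis
    unfolding flow_mean_def flow_0[OF \<open>r2 < e\<close>] by (simp add: mult.commute)
qed

lemma flow_mean_generator:
  assumes e: "e \<in> {0..1}"
    and g: "\<forall>x\<in>{0..1}. (g has_real_derivative g' x) (at x within {0..1})" and g': "continuous_on {0..1} g'"
  shows "flow_mean e (gen \<theta>1 \<theta>2 \<beta> g g') = g 1 * flow_mean e (\<lambda>x. x) + g 0 * (1 - flow_mean e (\<lambda>x. x)) - g e"
proof -
  have g_cont: "continuous_on {0..1} g"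
    using g by (intro DERIV_continuous_on) blast
  have "gen \<theta>1 \<theta>2 \<beta> g g' = (\<lambda>x. (g 1 * x + g 0 * (1 - x)) + (v x * g' x - g x))"
    by (auto simp: gen_def algebra_simps)
  moreover have "flow_mean e (\<lambda>x. g 1 * x + g 0 * (1 - x)) = g 1 * flow_mean e (\<lambda>x. x) + g 0 * (1 - flow_mean e (\<lambda>x. x))"
    using e by (simp add: flow_mean_add flow_mean_diff flow_mean_cmult flow_mean_const continuous_intros)
  moreover have "flow_mean e (\<lambda>x. v x * g' x - g x) = - g e"
    using e g_cont g' continuous_on_drift
    by (simp add: flow_mean_diff flow_mean_drift_times_derivative[OF e g g'] continuous_intros)
  ultimately show ?thesis
    using e g_cont g' continuous_on_drift by (simp add: flow_mean_add continuous_intros)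
qed

section \<open>Stationary distributions\<close>

definition mix_density :: "real \<Rightarrow> real \<Rightarrow> real" where
  "mix_density m x = m * indicator {r1<..<1} x * flow_density 1 x
     + (1 - m) * indicator {0<..<r1} x * flow_density 0 x"

definition stat_measure :: "real \<Rightarrow> real measure" where
  "stat_measure m = density lborel (\<lambda>x. ennreal (mix_density m x))"

lemma stat_density_eq_mix_density: "stat_density \<theta>1 \<theta>2 \<beta> \<pi>1 (1 - \<pi>1) = mix_density \<pi>1"
proof
  fix x
  have "ycoord x / ycoord 1 = (x - r1) / (x - r2) * ((1 - r2) / (1 - r1))"
    "1 / \<bar>ycoord 1\<bar> = (1 - r2) / (1 - r1)"
    "ycoord x / ycoord 0 = (r1 - x) / (x - r2) * (- r2 / r1)"
    "1 / \<bar>ycoord 0\<bar> = - r2 / r1"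
    using roots_bounds by (cases "x = r2"; auto simp: ycoord_def field_simps abs_div)+
  then show "stat_density \<theta>1 \<theta>2 \<beta> \<pi>1 (1 - \<pi>1) x = mix_density \<pi>1 x"
    unfolding stat_density_def mix_density_def flow_density_def Let_def
    by (simp add: divide_inverse ac_simps)
qed

lemma mix_density_nonneg: "0 \<le> m \<Longrightarrow> m \<le> 1 \<Longrightarrow> 0 \<le> mix_density m x"
  unfolding mix_density_def using flow_density_nonneg by (simp add: add_nonneg_nonneg)

lemma mix_density_integrable: "integrable lborel (mix_density m)"
  and mix_density_integral: "integral\<^sup>L lborel (mix_density m) = 1"
proof -
  have "r2 < 0" "0 < r1" "r1 < 1"
    using roots_bounds by auto
  then have "set_integrable lborel {r1<..<1} (flow_density 1)" "set_integrable lborel {0<..<r1} (flow_density 0)"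
    "(LINT x:{r1<..<1}|lborel. flow_density 1 x) = 1" "(LINT x:{0<..<r1}|lborel. flow_density 0 x) = 1"
    using flow_law_above[of 1 "\<lambda>_. 1"] flow_law_below[of 0 "\<lambda>_. 1"] flow_mean_const
    unfolding flow_mean_def by auto
  then show "integrable lborel (mix_density m)" "integral\<^sup>L lborel (mix_density m) = 1"
    unfolding set_integrable_def set_lebesgue_integral_def mix_density_def[abs_def]
    by (simp_all add: mult.assoc)
qed

lemma integral_stat_measure:
  assumes m: "0 \<le> m" "m \<le> 1" and h: "continuous_on {0..1} h"
  shows "(LINT x:{0..1}|stat_measure m. h x) = m * flow_mean 1 h + (1 - m) * flow_mean 0 h"
proof -
  have "r2 < 0" "0 < r1" "r1 < 1"
    using roots_bounds by auto
  then have law1: "set_integrable lborel {r1<..<1} (\<lambda>x. h x * flow_density 1 x)"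
      "(LINT x:{r1<..<1}|lborel. h x * flow_density 1 x) = flow_mean 1 h"
    and law0: "set_integrable lborel {0<..<r1} (\<lambda>x. h x * flow_density 0 x)"
      "(LINT x:{0<..<r1}|lborel. h x * flow_density 0 x) = flow_mean 0 h"
    using flow_law_above[of 1 h] flow_law_below[of 0 h] continuous_on_subset[OF h]
    unfolding flow_mean_def by auto
  have "mix_density m \<in> borel_measurable borel"
    using borel_measurable_integrable[OF mix_density_integrable] by simp
  then have "(LINT x:{0..1}|stat_measure m. h x) = (LINT x|lborel. mix_density m x * (indicator {0..1} x * h x))"
    unfolding stat_measure_def set_lebesgue_integral_def using m mix_density_nonneg
      borel_measurable_continuous_on_indicator[OF _ h]
    by (subst integral_density) auto
  also have "\<dots> = (LINT x|lborel. m * (indicator {r1<..<1} x * (h x * flow_density 1 x))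
      + (1 - m) * (indicator {0<..<r1} x * (h x * flow_density 0 x)))"
    using \<open>0 < r1\<close> \<open>r1 < 1\<close>
    by (intro Bochner_Integration.integral_cong) (auto simp: mix_density_def split: split_indicator)
  also have "\<dots> = m * flow_mean 1 h + (1 - m) * flow_mean 0 h"
    using law1 law0 unfolding set_integrable_def set_lebesgue_integral_def by simp
  finally show ?thesis .
qed

lemma stat_measure_distribution:
  assumes "0 \<le> m" "m \<le> 1"
  shows "real_distribution (stat_measure m)" and "emeasure (stat_measure m) {0..1} = 1"
proof -
  have meas: "mix_density m \<in> borel_measurable borel"
    using borel_measurable_integrable[OF mix_density_integrable] by simp
  have total: "(\<integral>\<^sup>+ x. ennreal (mix_density m x) \<partial>lborel) = 1"
    using nn_integral_eq_integral[OF mix_density_integrable] mix_density_nonneg[OF assms] mix_density_integral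
    by simp
  have "x \<notin> {0..1} \<Longrightarrow> mix_density m x = 0" for x
    using roots_bounds by (auto simp: mix_density_def split: split_indicator)
  then have "(\<integral>\<^sup>+ x. ennreal (mix_density m x) * indicator {0..1} x \<partial>lborel) = 1"
    unfolding total[symmetric] by (intro nn_integral_cong) (auto split: split_indicator)
  then show "emeasure (stat_measure m) {0..1} = 1"
    unfolding stat_measure_def using meas by (simp add: emeasure_density)
  show "real_distribution (stat_measure m)"
    unfolding real_distribution_def real_distribution_axioms_def stat_measure_def
    using meas total by (auto intro!: prob_spaceI simp: emeasure_density)
qed

lemma integral_generator_stat_measure:
  assumes m: "0 \<le> m" "m \<le> 1"
    and g: "\<forall>x\<in>{0..1}. (g has_real_derivative g' x) (at x within {0..1})" and g': "continuous_on {0..1} g'"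
  shows "(LINT x:{0..1}|stat_measure m. gen \<theta>1 \<theta>2 \<beta> g g' x)
    = (g 1 - g 0) * (m * flow_mean 1 (\<lambda>x. x) + (1 - m) * flow_mean 0 (\<lambda>x. x) - m)"
proof -
  have "continuous_on {0..1} g"
    using g by (intro DERIV_continuous_on) blast
  then have "continuous_on {0..1} (gen \<theta>1 \<theta>2 \<beta> g g')"
    using g' continuous_on_drift unfolding gen_def by (intro continuous_intros)
  then have "(LINT x:{0..1}|stat_measure m. gen \<theta>1 \<theta>2 \<beta> g g' x)
      = m * flow_mean 1 (gen \<theta>1 \<theta>2 \<beta> g g') + (1 - m) * flow_mean 0 (gen \<theta>1 \<theta>2 \<beta> g g')"
    by (rule integral_stat_measure[OF m])
  also have "\<dots> = m * (g 1 * flow_mean 1 (\<lambda>x. x) + g 0 * (1 - flow_mean 1 (\<lambda>x. x)) - g 1)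
      + (1 - m) * (g 1 * flow_mean 0 (\<lambda>x. x) + g 0 * (1 - flow_mean 0 (\<lambda>x. x)) - g 0)"
    using flow_mean_generator[OF _ g g', of 1] flow_mean_generator[OF _ g g', of 0] by simp
  also have "\<dots> = (g 1 - g 0) * (m * flow_mean 1 (\<lambda>x. x) + (1 - m) * flow_mean 0 (\<lambda>x. x) - m)"
    by (simp add: algebra_simps)
  finally show ?thesis .
qed

lemma stationary_stat_measure_iff:
  assumes m: "0 \<le> m" "m \<le> 1"
  shows "stationary_gen \<theta>1 \<theta>2 \<beta> (stat_measure m)
    \<longleftrightarrow> m = m * flow_mean 1 (\<lambda>x. x) + (1 - m) * flow_mean 0 (\<lambda>x. x)"
proof
  assume "stationary_gen \<theta>1 \<theta>2 \<beta> (stat_measure m)"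
  moreover have "\<forall>x\<in>{0..1}. ((\<lambda>x. x) has_real_derivative 1) (at x within {0..1})"
    by (auto intro!: derivative_eq_intros)
  ultimately have "(LINT x:{0..1}|stat_measure m. gen \<theta>1 \<theta>2 \<beta> (\<lambda>x. x) (\<lambda>_. 1) x) = 0"
    unfolding stationary_gen_def by auto
  then show "m = m * flow_mean 1 (\<lambda>x. x) + (1 - m) * flow_mean 0 (\<lambda>x. x)"
    using integral_generator_stat_measure[OF m \<open>\<forall>x\<in>{0..1}. _\<close> continuous_on_const] by simp
next
  assume "m = m * flow_mean 1 (\<lambda>x. x) + (1 - m) * flow_mean 0 (\<lambda>x. x)"
  then show "stationary_gen \<theta>1 \<theta>2 \<beta> (stat_measure m)"
    using stat_measure_distribution[OF m] integral_generator_stat_measure[OF m]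
    unfolding stationary_gen_def real_distribution_def real_distribution_axioms_def
    by (simp add: stat_measure_def)
qed

lemma generator_ycoord_power:
  obtains D where "\<forall>x\<in>{0..1}. ((\<lambda>x. ycoord x ^ n) has_real_derivative D x) (at x within {0..1})"
    and "continuous_on {0..1} D"
    and "\<And>x. x \<in> {0..1} \<Longrightarrow> gen \<theta>1 \<theta>2 \<beta> (\<lambda>x. ycoord x ^ n) D x
      = (ycoord 1 ^ n - ycoord 0 ^ n) * x + ycoord 0 ^ n - (1 + n * rate) * ycoord x ^ n"
proof
  define D where "D x = n * ((r1 - r2) / (x - r2)\<^sup>2 * ycoord x ^ (n - Suc 0))" for x
  have nz: "x - r2 \<noteq> 0" if "x \<in> {0..1}" for x
    using that roots_bounds by auto
  show "continuous_on {0..1} D"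
    unfolding D_def using continuous_on_ycoord nz by (intro continuous_intros) auto
  show "\<forall>x\<in>{0..1}. ((\<lambda>x. ycoord x ^ n) has_real_derivative D x) (at x within {0..1})"
  proof
    fix x :: real assume "x \<in> {0..1}"
    then have "x \<noteq> r2" using nz by auto
    from DERIV_power[OF ycoord_deriv[OF this], of n]
    show "((\<lambda>x. ycoord x ^ n) has_real_derivative D x) (at x within {0..1})"
      unfolding D_def by (rule has_field_derivative_at_within)
  qed
  fix x :: real assume "x \<in> {0..1}"
  have "v x * D x = n * (v x * ((r1 - r2) / (x - r2)\<^sup>2)) * ycoord x ^ (n - Suc 0)"
    unfolding D_def by (simp only: ac_simps)
  also have "\<dots> = n * rate * - (ycoord x * ycoord x ^ (n - Suc 0))"
    using drift_times_ycoord_deriv[of x] nz[OF \<open>x \<in> {0..1}\<close>] by simp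
  also have "\<dots> = - (n * rate) * ycoord x ^ n"
    by (cases n) simp_all
  finally have vD: "v x * D x = - (n * rate) * ycoord x ^ n" .
  show "gen \<theta>1 \<theta>2 \<beta> (\<lambda>x. ycoord x ^ n) D x
      = (ycoord 1 ^ n - ycoord 0 ^ n) * x + ycoord 0 ^ n - (1 + n * rate) * ycoord x ^ n"
    unfolding gen_def vD by (simp add: algebra_simps)
qed

lemma stationary_ycoord_moments:
  assumes st: "stationary_gen \<theta>1 \<theta>2 \<beta> M"
  defines "m \<equiv> LINT x:{0..1}|M. x"
  shows "(LINT x:{0..1}|M. ycoord x ^ n) = (m * ycoord 1 ^ n + (1 - m) * ycoord 0 ^ n) / (1 + n * rate)"
proof -
  have M: "prob_space M" "sets M = sets borel" "emeasure M {0..1} = 1"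
    and stat: "\<And>g g'. \<forall>x\<in>{0..1}. (g has_real_derivative g' x) (at x within {0..1}) \<Longrightarrow>
      continuous_on {0..1} g' \<Longrightarrow> (LINT x:{0..1}|M. gen \<theta>1 \<theta>2 \<beta> g g' x) = 0"
    using st unfolding stationary_gen_def by auto
  have int: "set_integrable M {0..1} h" if "continuous_on {0..1} h" for h :: "real \<Rightarrow> real"
    using M(1,2) that by (intro set_integrable_continuous_on_compact) (auto simp: prob_space_def)
  obtain D where D: "\<forall>x\<in>{0..1}. ((\<lambda>x. ycoord x ^ n) has_real_derivative D x) (at x within {0..1})"
    "continuous_on {0..1} D"
    and gen_eq: "\<And>x. x \<in> {0..1} \<Longrightarrow> gen \<theta>1 \<theta>2 \<beta> (\<lambda>x. ycoord x ^ n) D x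
      = (ycoord 1 ^ n - ycoord 0 ^ n) * x + ycoord 0 ^ n - (1 + n * rate) * ycoord x ^ n"
    using generator_ycoord_power[where n=n] by blast
  have "0 = (LINT x:{0..1}|M. gen \<theta>1 \<theta>2 \<beta> (\<lambda>x. ycoord x ^ n) D x)"
    using stat[OF D] by simp
  also have "\<dots> = (LINT x:{0..1}|M. (ycoord 1 ^ n - ycoord 0 ^ n) * x + ycoord 0 ^ n
      - (1 + n * rate) * ycoord x ^ n)"
    using M(2) gen_eq by (intro set_lebesgue_integral_cong) auto
  also have "\<dots> = (ycoord 1 ^ n - ycoord 0 ^ n) * m + ycoord 0 ^ n
      - (1 + n * rate) * (LINT x:{0..1}|M. ycoord x ^ n)"
  proof -
    have "set_integrable M {0..1} (\<lambda>x. (ycoord 1 ^ n - ycoord 0 ^ n) * x)"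
      "set_integrable M {0..1} (\<lambda>_. ycoord 0 ^ n)"
      "set_integrable M {0..1} (\<lambda>x. (1 + n * rate) * ycoord x ^ n)"
      using continuous_on_ycoord by (auto intro!: int continuous_intros)
    note ints = set_integral_add(1)[OF this(1,2)] this
    show ?thesis
      using full_measure_set(2)[OF M(1,2) _ M(3), of "ycoord 0 ^ n"]
      unfolding m_def set_integral_diff(2)[OF ints(1,4)] set_integral_add(2)[OF ints(2,3)] by simp
  qed
  finally have "(1 + n * rate) * (LINT x:{0..1}|M. ycoord x ^ n) = m * ycoord 1 ^ n + (1 - m) * ycoord 0 ^ n"
    by (simp add: algebra_simps)
  moreover have "1 + n * rate > 0"
    using rate_pos by (simp add: add_pos_nonneg)
  ultimately show ?thesis
    by (simp add: eq_divide_eq mult.commute)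
qed

lemma stationary_mean_bounds:
  assumes "stationary_gen \<theta>1 \<theta>2 \<beta> M"
  shows "0 \<le> (LINT x:{0..1}|M. x)" and "(LINT x:{0..1}|M. x) \<le> 1"
proof -
  have M: "prob_space M" "sets M = sets borel" "emeasure M {0..1} = 1"
    using assms unfolding stationary_gen_def by auto
  have fin: "finite_measure M"
    using M(1) by (simp add: prob_space_def)
  show "0 \<le> (LINT x:{0..1}|M. x)"
    unfolding set_lebesgue_integral_def
    by (rule Bochner_Integration.integral_nonneg) (auto split: split_indicator)
  have "(LINT x:{0..1}|M. x) \<le> (LINT x:{0..1}|M. 1)"
    by (intro set_integral_mono set_integrable_continuous_on_compact[OF fin M(2) compact_Icc]
        continuous_intros) auto
  then show "(LINT x:{0..1}|M. x) \<le> 1"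
    using full_measure_set(2)[OF M(1,2) _ M(3)] by simp
qed

lemma stationary_eq_stat_measure:
  assumes st: "stationary_gen \<theta>1 \<theta>2 \<beta> M"
  shows "M = stat_measure (LINT x:{0..1}|M. x)"
proof -
  define m where "m = (LINT x:{0..1}|M. x)"
  have m: "0 \<le> m" "m \<le> 1"
    using stationary_mean_bounds[OF st] unfolding m_def by auto
  have M: "prob_space M" "sets M = sets borel" "emeasure M {0..1} = 1"
    using st unfolding stationary_gen_def by auto
  note S = stat_measure_distribution[OF m]
  have S_sets: "sets (stat_measure m) = sets borel"
    by (simp add: stat_measure_def)
  show ?thesis
    unfolding m_def[symmetric]
  proof (rule real_distribution_eqI_moments[OF _ _ S(1) _ compact_Icc _ inj_on_ycoord])
    show "real_distribution M"
      using M by (simp add: real_distribution_def real_distribution_axioms_def)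
    show "AE x in M. x \<in> {0..1}"
      using full_measure_set(1)[OF M(1,2) _ M(3)] by simp
    show "AE x in stat_measure m. x \<in> {0..1}"
      using full_measure_set(1)[OF _ S_sets _ S(2)] S(1) by (simp add: real_distribution_def)
    show "continuous_on {0..1} ycoord"
      by (rule continuous_on_ycoord)
    fix n
    have "(LINT x:{0..1}|stat_measure m. ycoord x ^ n)
        = m * flow_mean 1 (\<lambda>x. ycoord x ^ n) + (1 - m) * flow_mean 0 (\<lambda>x. ycoord x ^ n)"
      using \<open>continuous_on {0..1} ycoord\<close> by (intro integral_stat_measure m continuous_intros)
    also have "\<dots> = (m * ycoord 1 ^ n + (1 - m) * ycoord 0 ^ n) / (1 + n * rate)"
      using roots_bounds by (simp add: flow_mean_ycoord_power add_divide_distrib)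
    finally show "(LINT x:{0..1}|M. ycoord x ^ n) = (LINT x:{0..1}|stat_measure m. ycoord x ^ n)"
      using stationary_ycoord_moments[OF st] unfolding m_def by simp
  qed
qed

lemma stationary_gen_iff_eq_stat_measure:
  assumes p: "0 \<le> p" "p \<le> 1" and fixed: "p = p * flow_mean 1 (\<lambda>x. x) + (1 - p) * flow_mean 0 (\<lambda>x. x)"
  shows "stationary_gen \<theta>1 \<theta>2 \<beta> M \<longleftrightarrow> M = stat_measure p"
proof
  assume st: "stationary_gen \<theta>1 \<theta>2 \<beta> M"
  define m where "m = (LINT x:{0..1}|M. x)"
  have m: "0 \<le> m" "m \<le> 1" and M_eq: "M = stat_measure m"
    using stationary_mean_bounds[OF st] stationary_eq_stat_measure[OF st] unfolding m_def by auto
  then have "m = m * flow_mean 1 (\<lambda>x. x) + (1 - m) * flow_mean 0 (\<lambda>x. x)"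
    using st stationary_stat_measure_iff by simp
  then have "(m - p) * (1 - flow_mean 1 (\<lambda>x. x) + flow_mean 0 (\<lambda>x. x)) = 0"
    using fixed by (simp add: algebra_simps)
  then have "m = p"
    using flow_mean_identity_bounds by simp
  then show "M = stat_measure p"
    using M_eq by simp
next
  assume "M = stat_measure p"
  then show "stationary_gen \<theta>1 \<theta>2 \<beta> M"
    using stationary_stat_measure_iff[OF p] fixed by simp
qed

end

theorem theorem10:
  fixes \<theta>1 \<theta>2 \<beta> \<pi>1 \<pi>2 :: real and \<mu> \<nu> :: "real \<Rightarrow> real"
  assumes "\<theta>1 > 0" and "\<theta>2 > 0" and "\<beta> > 0"
    and mu_ode: "\<And>t. t \<ge> 0 \<Longrightarrow> (\<mu> has_real_derivative drift \<theta>1 \<theta>2 \<beta> (\<mu> t)) (at t within {0..})"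
    and mu0: "\<mu> 0 = 1"
    and nu_ode: "\<And>t. t \<ge> 0 \<Longrightarrow> (\<nu> has_real_derivative drift \<theta>1 \<theta>2 \<beta> (\<nu> t)) (at t within {0..})"
    and nu0: "\<nu> 0 = 0"
    and pi: "stationary_P \<mu> \<nu> \<pi>1 \<pi>2"
  shows "0 < root1 \<theta>1 \<theta>2 \<beta> \<and> root1 \<theta>1 \<theta>2 \<beta> < 1 \<and> root2 \<theta>1 \<theta>2 \<beta> < 0
    \<and> (\<forall>t\<ge>0. \<mu> t = mu_formula \<theta>1 \<theta>2 \<beta> t \<and> \<nu> t = nu_formula \<theta>1 \<theta>2 \<beta> t)
    \<and> (\<forall>M. stationary_gen \<theta>1 \<theta>2 \<beta> M \<longleftrightarrow>
           M = density lborel (\<lambda>\<xi>. ennreal (stat_density \<theta>1 \<theta>2 \<beta> \<pi>1 \<pi>2 \<xi>)))"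
proof -
  interpret star_model \<theta>1 \<theta>2 \<beta>
    using assms(1-3) by unfold_locales
  have \<mu>: "\<mu> t = flow 1 t" and \<nu>: "\<nu> t = flow 0 t" if "t \<ge> 0" for t
    using flow_eq_ode_solution[OF _ mu_ode mu0 that] flow_eq_ode_solution[OF _ nu_ode nu0 that] roots_bounds
    by auto
  have \<pi>: "0 \<le> \<pi>1" "\<pi>1 \<le> 1" "\<pi>2 = 1 - \<pi>1" "\<pi>1 = \<pi>1 * Pbar \<mu> + \<pi>2 * Pbar \<nu>"
    using pi unfolding stationary_P_def by auto
  moreover have "Pbar \<mu> = flow_mean 1 (\<lambda>x. x)" "Pbar \<nu> = flow_mean 0 (\<lambda>x. x)"
    using Pbar_eq_flow_mean \<mu> \<nu> by auto
  ultimately have "\<forall>M. stationary_gen \<theta>1 \<theta>2 \<beta> M \<longleftrightarrow> M = stat_measure \<pi>1"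
    using stationary_gen_iff_eq_stat_measure by simp
  moreover have "density lborel (\<lambda>\<xi>. ennreal (stat_density \<theta>1 \<theta>2 \<beta> \<pi>1 \<pi>2 \<xi>)) = stat_measure \<pi>1"
    unfolding stat_measure_def \<pi>(3) stat_density_eq_mix_density ..
  ultimately show ?thesis
    using roots_bounds \<mu> \<nu> by (simp add: mu_formula_eq_flow nu_formula_eq_flow)
qed

end
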